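(* Under the CRFE, the linear projection of $\hat{\boldsymbol{\tau}}-\boldsymbol{\tau}$ on $\hat{\boldsymbol{\tau}}_x$ is $\boldsymbol{V}_{\tau x}\boldsymbol{V}_{xx}^{-1}\hat{\boldsymbol{\tau}}_x$, the residual is $\hat{\boldsymbol{\tau}}-\boldsymbol{\tau}-\boldsymbol{V}_{\tau x}\boldsymbol{V}_{xx}^{-1}\hat{\boldsymbol{\tau}}_x$, and $\mathrm{Cov}(\boldsymbol{V}_{\tau x}\boldsymbol{V}_{xx}^{-1}\hat{\boldsymbol{\tau}}_x)=\boldsymbol{V}^{\parallel}_{\tau\tau}$, $\mathrm{Cov}(\hat{\boldsymbol{\tau}}-\boldsymbol{\tau}-\boldsymbol{V}_{\tau x}\boldsymbol{V}_{xx}^{-1}\hat{\boldsymbol{\tau}}_x)=\boldsymbol{V}^{\perp}_{\tau\tau}$, and $\mathrm{Cov}(\boldsymbol{V}_{\tau x}\boldsymbol{V}_{xx}^{-1}\hat{\boldsymbol{\tau}}_x,\ \hat{\boldsymbol{\tau}}-\boldsymbol{\tau}-\boldsymbol{V}_{\tau x}\boldsymbol{V}_{xx}^{-1}\hat{\boldsymbol{\tau}}_x)=\boldsymbol{0}$.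
   Context: Setup ($2^K$ factorial experiment, finite population). There are $K\ge 1$ factors with levels $\pm1$ and $Q=2^K$ treatment combinations $q=1,\dots,Q$; combination $q$ sets factor $k$ at level $\iota_k(q)\in\{-1,+1\}$, bijectively onto $\{-1,+1\}^K$. There are $F=Q-1$ factorial effects, one for each nonempty $A\subseteq\{1,\dots,K\}$, enumerated $f=1,\dots,F$, with $g_{fq}=\prod_{k\in A}\iota_k(q)$; $\boldsymbol{b}_q=(g_{1q},\dots,g_{Fq})'$. Units $i=1,\dots,n$ have fixed potential outcomes $Y_i(q)$ and covariates $\boldsymbol{x}_i\in\mathbb{R}^L$; $\bar Y(q)$, $\bar{\boldsymbol{x}}$ are means, $\boldsymbol{\tau}_i=2^{-(K-1)}\sum_q\boldsymbol{b}_qY_i(q)$, $\boldsymbol{\tau}=2^{-(K-1)}\sum_q\boldsymbol{b}_q\bar Y(q)$. Finite-population (co)variances have divisor $n-1$: $S_{qq}$ of $Y(q)$, $\boldsymbol{S}_{xx}$ of $\boldsymbol{x}$ (nonsingular), $\boldsymbol{S}_{q,x}=\boldsymbol{S}_{x,q}'$ between $Y(q)$ and $\boldsymbol{x}$. CRFE: with fixed $n_q\ge1$, $\sum n_q=n$, $\boldsymbol{Z}$ is uniform over assignments with $n_q$ units in combination $q$; $\hat{\bar Y}(q)$ and $\hat{\bar{\boldsymbol{x}}}(q)$ are the observed-outcome and covariate means in group $q$; $\hat{\boldsymbol{\tau}}=2^{-(K-1)}\sum_q\boldsymbol{b}_q\hat{\bar Y}(q)$, $\hat{\boldsymbol{\tau}}_x=(\hat{\boldsymbol{\tau}}_{x,1}',\dots,\hat{\boldsymbol{\tau}}_{x,F}')'$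 with $\hat{\boldsymbol{\tau}}_{x,f}=2^{-(K-1)}\sum_qg_{fq}\hat{\bar{\boldsymbol{x}}}(q)$. $\boldsymbol{V}_{\tau x}=\boldsymbol{V}_{x\tau}'=2^{-2(K-1)}\sum_qn_q^{-1}(\boldsymbol{b}_q\boldsymbol{b}_q')\otimes\boldsymbol{S}_{q,x}$, $\boldsymbol{V}_{xx}=2^{-2(K-1)}\sum_qn_q^{-1}(\boldsymbol{b}_q\boldsymbol{b}_q')\otimes\boldsymbol{S}_{xx}$ (these are the covariance blocks of $(\hat{\boldsymbol{\tau}},\hat{\boldsymbol{\tau}}_x)$ under the CRFE). Linear projections: $Y_i^{\parallel}(q)=\bar Y(q)+\boldsymbol{S}_{q,x}\boldsymbol{S}_{xx}^{-1}(\boldsymbol{x}_i-\bar{\boldsymbol{x}})$, $Y_i^{\perp}(q)=Y_i(q)-Y_i^{\parallel}(q)$, $\boldsymbol{\tau}_i^{\parallel}=2^{-(K-1)}\sum_q\boldsymbol{b}_qY_i^{\parallel}(q)$, $\boldsymbol{\tau}_i^{\perp}=2^{-(K-1)}\sum_q\boldsymbol{b}_qY_i^{\perp}(q)$. Let $S_{qq}^{\parallel},S_{qq}^{\perp}$ be the finite-population variances (divisor $n-1$) of $Y^{\parallel}(q),Y^{\perp}(q)$ and $\boldsymbol{S}_{\tau\tau}^{\parallel},\boldsymbol{S}_{\tau\tau}^{\perp}$ those of $\boldsymbol{\tau}^{\parallel},\boldsymbol{\tau}^{\perp}$. Define $\boldsymbol{V}_{\tau\tau}^{\parallel}=2^{-2(K-1)}\sum_qn_q^{-1}\boldsymbol{b}_q\boldsymbol{b}_q'S^{\parallel}_{qq}-n^{-1}\boldsymbol{S}^{\parallel}_{\tau\tau}$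 and $\boldsymbol{V}_{\tau\tau}^{\perp}=2^{-2(K-1)}\sum_qn_q^{-1}\boldsymbol{b}_q\boldsymbol{b}_q'S^{\perp}_{qq}-n^{-1}\boldsymbol{S}^{\perp}_{\tau\tau}$. *)

theory Defs
  imports "Jordan_Normal_Form.Gauss_Jordan_Elimination" "HOL-Library.FuncSet"
begin

(* Conventions: units are i = 0..n-1, treatment combinations q = 0..Q-1 (Q = 2^K),
   factors k = 1..K, factorial effects f = 0..F-1 (F = Q - 1), covariates l = 0..L-1.
   Potential outcomes: Y i q; covariates: x i l.  *)

definition mat_inv :: "real mat \<Rightarrow> real mat" where
  "mat_inv A = (case mat_inverse A of Some B \<Rightarrow> B | None \<Rightarrow> 0\<^sub>m (dim_row A) (dim_row A))"

definition kron :: "real mat \<Rightarrow> real mat \<Rightarrow> real mat" where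
  "kron A B = mat (dim_row A * dim_row B) (dim_col A * dim_col B)
     (\<lambda>(i,j). A $$ (i div dim_row B, j div dim_col B) * B $$ (i mod dim_row B, j mod dim_col B))"

definition outer :: "real vec \<Rightarrow> real vec \<Rightarrow> real mat" where
  "outer u v = mat (dim_vec u) (dim_vec v) (\<lambda>(i,j). u $ i * v $ j)"

definition fmean :: "nat \<Rightarrow> (nat \<Rightarrow> real) \<Rightarrow> real" where
  "fmean n u = (\<Sum>i<n. u i) / real n"

definition fcov :: "nat \<Rightarrow> (nat \<Rightarrow> real) \<Rightarrow> (nat \<Rightarrow> real) \<Rightarrow> real" where
  "fcov n u v = (\<Sum>i<n. (u i - fmean n u) * (v i - fmean n v)) / (real n - 1)"

definition gcoef :: "(nat \<Rightarrow> nat set) \<Rightarrow> (nat \<Rightarrow> nat \<Rightarrow> int) \<Rightarrow> nat \<Rightarrow> nat \<Rightarrow> real" where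
  "gcoef eff iota f q = (\<Prod>k\<in>eff f. real_of_int (iota q k))"

definition bvec :: "nat \<Rightarrow> (nat \<Rightarrow> nat set) \<Rightarrow> (nat \<Rightarrow> nat \<Rightarrow> int) \<Rightarrow> nat \<Rightarrow> real vec" where
  "bvec K eff iota q = vec (2^K - 1) (\<lambda>f. gcoef eff iota f q)"

definition Sxx :: "nat \<Rightarrow> nat \<Rightarrow> (nat \<Rightarrow> nat \<Rightarrow> real) \<Rightarrow> real mat" where
  "Sxx n L x = mat L L (\<lambda>(l,m). fcov n (\<lambda>i. x i l) (\<lambda>i. x i m))"

definition Sqx :: "nat \<Rightarrow> nat \<Rightarrow> (nat \<Rightarrow> nat \<Rightarrow> real) \<Rightarrow> (nat \<Rightarrow> nat \<Rightarrow> real) \<Rightarrow> nat \<Rightarrow> real mat" where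
  "Sqx n L Y x q = mat 1 L (\<lambda>(_,l). fcov n (\<lambda>i. Y i q) (\<lambda>i. x i l))"

definition c2 :: "nat \<Rightarrow> real" where
  "c2 K = 1 / (2 ^ (K - 1))^2"

definition Vtx :: "nat \<Rightarrow> nat \<Rightarrow> nat \<Rightarrow> (nat \<Rightarrow> nat set) \<Rightarrow> (nat \<Rightarrow> nat \<Rightarrow> int) \<Rightarrow> (nat \<Rightarrow> nat)
     \<Rightarrow> (nat \<Rightarrow> nat \<Rightarrow> real) \<Rightarrow> (nat \<Rightarrow> nat \<Rightarrow> real) \<Rightarrow> real mat" where
  "Vtx K n L eff iota nq Y x = mat (2^K - 1) ((2^K - 1) * L) (\<lambda>(r,s).
     c2 K * (\<Sum>q<2^K. (1 / real (nq q)) *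
        kron (outer (bvec K eff iota q) (bvec K eff iota q)) (Sqx n L Y x q) $$ (r,s)))"

definition Vxx :: "nat \<Rightarrow> nat \<Rightarrow> nat \<Rightarrow> (nat \<Rightarrow> nat set) \<Rightarrow> (nat \<Rightarrow> nat \<Rightarrow> int) \<Rightarrow> (nat \<Rightarrow> nat)
     \<Rightarrow> (nat \<Rightarrow> nat \<Rightarrow> real) \<Rightarrow> real mat" where
  "Vxx K n L eff iota nq x = mat ((2^K - 1) * L) ((2^K - 1) * L) (\<lambda>(r,s).
     c2 K * (\<Sum>q<2^K. (1 / real (nq q)) *
        kron (outer (bvec K eff iota q) (bvec K eff iota q)) (Sxx n L x) $$ (r,s)))"

definition tau_ind :: "nat \<Rightarrow> (nat \<Rightarrow> nat set) \<Rightarrow> (nat \<Rightarrow> nat \<Rightarrow> int) \<Rightarrow> (nat \<Rightarrow> nat \<Rightarrow> real) \<Rightarrow> nat \<Rightarrow> real vec" where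
  "tau_ind K eff iota Y i = vec (2^K - 1) (\<lambda>f. (1 / 2 ^ (K - 1)) * (\<Sum>q<2^K. gcoef eff iota f q * Y i q))"

definition Stt :: "nat \<Rightarrow> nat \<Rightarrow> (nat \<Rightarrow> nat set) \<Rightarrow> (nat \<Rightarrow> nat \<Rightarrow> int) \<Rightarrow> (nat \<Rightarrow> nat \<Rightarrow> real) \<Rightarrow> real mat" where
  "Stt K n eff iota Y = mat (2^K - 1) (2^K - 1) (\<lambda>(f,f').
     fcov n (\<lambda>i. tau_ind K eff iota Y i $ f) (\<lambda>i. tau_ind K eff iota Y i $ f'))"

definition Vtt :: "nat \<Rightarrow> nat \<Rightarrow> (nat \<Rightarrow> nat set) \<Rightarrow> (nat \<Rightarrow> nat \<Rightarrow> int) \<Rightarrow> (nat \<Rightarrow> nat)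
     \<Rightarrow> (nat \<Rightarrow> nat \<Rightarrow> real) \<Rightarrow> real mat" where
  "Vtt K n eff iota nq Y = mat (2^K - 1) (2^K - 1) (\<lambda>(f,f').
     c2 K * (\<Sum>q<2^K. (1 / real (nq q)) * outer (bvec K eff iota q) (bvec K eff iota q) $$ (f,f')
                 * fcov n (\<lambda>i. Y i q) (\<lambda>i. Y i q))
     - (1 / real n) * Stt K n eff iota Y $$ (f,f'))"

definition Ypar :: "nat \<Rightarrow> nat \<Rightarrow> (nat \<Rightarrow> nat \<Rightarrow> real) \<Rightarrow> (nat \<Rightarrow> nat \<Rightarrow> real) \<Rightarrow> nat \<Rightarrow> nat \<Rightarrow> real" where
  "Ypar n L Y x i q = fmean n (\<lambda>j. Y j q)
     + (Sqx n L Y x q *\<^sub>v (mat_inv (Sxx n L x) *\<^sub>v vec L (\<lambda>l. x i l - fmean n (\<lambda>j. x j l)))) $ 0"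

definition Yperp :: "nat \<Rightarrow> nat \<Rightarrow> (nat \<Rightarrow> nat \<Rightarrow> real) \<Rightarrow> (nat \<Rightarrow> nat \<Rightarrow> real) \<Rightarrow> nat \<Rightarrow> nat \<Rightarrow> real" where
  "Yperp n L Y x i q = Y i q - Ypar n L Y x i q"

(* CRFE: uniformly random assignment z : units -> combinations with n_q units in combination q *)
definition assignments :: "nat \<Rightarrow> nat \<Rightarrow> (nat \<Rightarrow> nat) \<Rightarrow> (nat \<Rightarrow> nat) set" where
  "assignments n Q nq = {z \<in> {..<n} \<rightarrow>\<^sub>E {..<Q}. \<forall>q<Q. card {i. i < n \<and> z i = q} = nq q}"

definition Ex :: "(nat \<Rightarrow> nat) set \<Rightarrow> ((nat \<Rightarrow> nat) \<Rightarrow> real) \<Rightarrow> real" where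
  "Ex Om X = (\<Sum>z\<in>Om. X z) / real (card Om)"

definition Exv :: "nat \<Rightarrow> (nat \<Rightarrow> nat) set \<Rightarrow> ((nat \<Rightarrow> nat) \<Rightarrow> real vec) \<Rightarrow> real vec" where
  "Exv d Om X = vec d (\<lambda>j. Ex Om (\<lambda>z. X z $ j))"

definition Covm :: "nat \<Rightarrow> nat \<Rightarrow> (nat \<Rightarrow> nat) set \<Rightarrow> ((nat \<Rightarrow> nat) \<Rightarrow> real vec) \<Rightarrow> ((nat \<Rightarrow> nat) \<Rightarrow> real vec) \<Rightarrow> real mat" where
  "Covm d1 d2 Om X W = mat d1 d2 (\<lambda>(j,k).
     Ex Om (\<lambda>z. (X z $ j - Ex Om (\<lambda>w. X w $ j)) * (W z $ k - Ex Om (\<lambda>w. W w $ k))))"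

definition lin_proj :: "nat \<Rightarrow> nat \<Rightarrow> (nat \<Rightarrow> nat) set \<Rightarrow> ((nat \<Rightarrow> nat) \<Rightarrow> real vec) \<Rightarrow> ((nat \<Rightarrow> nat) \<Rightarrow> real vec)
     \<Rightarrow> (nat \<Rightarrow> nat) \<Rightarrow> real vec" where
  "lin_proj d1 d2 Om X W z = Exv d1 Om X
     + (Covm d1 d2 Om X W * mat_inv (Covm d2 d2 Om W W)) *\<^sub>v (W z - Exv d2 Om W)"

definition Yhat :: "nat \<Rightarrow> (nat \<Rightarrow> nat) \<Rightarrow> (nat \<Rightarrow> nat \<Rightarrow> real) \<Rightarrow> (nat \<Rightarrow> nat) \<Rightarrow> nat \<Rightarrow> real" where
  "Yhat n nq Y z q = (\<Sum>i\<in>{i. i < n \<and> z i = q}. Y i q) / real (nq q)"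

definition xhat :: "nat \<Rightarrow> (nat \<Rightarrow> nat) \<Rightarrow> (nat \<Rightarrow> nat \<Rightarrow> real) \<Rightarrow> (nat \<Rightarrow> nat) \<Rightarrow> nat \<Rightarrow> nat \<Rightarrow> real" where
  "xhat n nq x z q l = (\<Sum>i\<in>{i. i < n \<and> z i = q}. x i l) / real (nq q)"

definition tauhat :: "nat \<Rightarrow> nat \<Rightarrow> (nat \<Rightarrow> nat set) \<Rightarrow> (nat \<Rightarrow> nat \<Rightarrow> int) \<Rightarrow> (nat \<Rightarrow> nat)
     \<Rightarrow> (nat \<Rightarrow> nat \<Rightarrow> real) \<Rightarrow> (nat \<Rightarrow> nat) \<Rightarrow> real vec" where
  "tauhat K n eff iota nq Y z = vec (2^K - 1) (\<lambda>f.
     (1 / 2 ^ (K - 1)) * (\<Sum>q<2^K. gcoef eff iota f q * Yhat n nq Y z q))"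

definition tau :: "nat \<Rightarrow> nat \<Rightarrow> (nat \<Rightarrow> nat set) \<Rightarrow> (nat \<Rightarrow> nat \<Rightarrow> int) \<Rightarrow> (nat \<Rightarrow> nat \<Rightarrow> real) \<Rightarrow> real vec" where
  "tau K n eff iota Y = vec (2^K - 1) (\<lambda>f.
     (1 / 2 ^ (K - 1)) * (\<Sum>q<2^K. gcoef eff iota f q * fmean n (\<lambda>i. Y i q)))"

(* stacked (tauhat_{x,1}', ..., tauhat_{x,F}')': entry f*L + l *)
definition tauhat_x :: "nat \<Rightarrow> nat \<Rightarrow> nat \<Rightarrow> (nat \<Rightarrow> nat set) \<Rightarrow> (nat \<Rightarrow> nat \<Rightarrow> int) \<Rightarrow> (nat \<Rightarrow> nat)
     \<Rightarrow> (nat \<Rightarrow> nat \<Rightarrow> real) \<Rightarrow> (nat \<Rightarrow> nat) \<Rightarrow> real vec" where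
  "tauhat_x K n L eff iota nq x z = vec ((2^K - 1) * L) (\<lambda>r.
     (1 / 2 ^ (K - 1)) * (\<Sum>q<2^K. gcoef eff iota (r div L) q * xhat n nq x z q (r mod L)))"

end

theory Submission
  imports Defs "HOL-Combinatorics.Transposition" "Jordan_Normal_Form.Determinant"
begin

(* Every component of tauhat - tau and of tauhat_x is a sum of group means
   sum_q Yhat_u(q) for suitable "potential outcomes" u, and under complete randomization
     Cov(sum_q Yhat_u(q), sum_q Yhat_v(q)) = sum_q S(u_q, v_q) / n_q - S(sum_q u_q, sum_q v_q) / n,
   which follows from the invariance of the design under permutations of the units.  Hence
   Cov(tauhat, tauhat_x) = V_tx and Cov(tauhat_x) = V_xx = M (x) S_xx, where
   M = 2^-2(K-1) sum_q b_q b_q' / n_q is invertible by the orthogonality of the contrasts, and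
   the projection is V_tx V_xx^-1 tauhat_x.  Replacing Y by its projection Y' on x leaves S_q,x
   unchanged, and tauhat(Y') - tau(Y') = C tauhat_x for an explicit matrix C (the contrasts are
   inverted with the weights n_q / n).  So V_tx = C V_xx, the projection equals
   tauhat(Y') - tau(Y'), and the residual is tauhat(Y'') - tau(Y'') for Y'' = Y - Y'.  The
   covariance formula gives the two covariance matrices, and the cross covariance vanishes
   because Y'(q) and Y''(q') are uncorrelated over the population. *)

section \<open>Finite-population and randomization covariances\<close>

lemma fmean_mult_left: "fmean n (\<lambda>i. a * u i) = a * fmean n u"
  unfolding fmean_def by (simp add: sum_distrib_left)

lemma fmean_add: "fmean n (\<lambda>i. u i + v i) = fmean n u + fmean n v"
  unfolding fmean_def by (simp add: sum.distrib add_divide_distrib)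

lemma fcov_commute: "fcov n u v = fcov n v u"
  unfolding fcov_def by (simp add: mult.commute)

lemma fcov_add_left: "fcov n (\<lambda>i. u i + u' i) v = fcov n u v + fcov n u' v"
proof -
  have "(u i + u' i - (fmean n u + fmean n u')) * (v i - fmean n v)
      = (u i - fmean n u) * (v i - fmean n v) + (u' i - fmean n u') * (v i - fmean n v)" for i
    by (simp add: algebra_simps)
  then show ?thesis
    unfolding fcov_def fmean_add by (simp add: sum.distrib add_divide_distrib)
qed

lemma fcov_mult_left: "fcov n (\<lambda>i. a * u i) v = a * fcov n u v"
  unfolding fcov_def fmean_mult_left
  by (simp add: algebra_simps sum_distrib_left)

lemma fcov_mult_right: "fcov n u (\<lambda>i. a * v i) = a * fcov n u v"
  using fcov_mult_left[of n a v u] by (simp add: fcov_commute)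

lemma fcov_const_left: "fcov n (\<lambda>i. c) v = 0"
  unfolding fcov_def fmean_def by (cases "n = 0") simp_all

lemma fcov_const_right: "fcov n u (\<lambda>i. c) = 0"
  using fcov_const_left[of n c u] by (simp add: fcov_commute)

lemma fcov_diff_const_left: "fcov n (\<lambda>i. u i - c) v = fcov n u v"
  using fcov_add_left[of n u "\<lambda>i. - c" v] by (simp add: fcov_const_left)

lemma fcov_diff_const_right: "fcov n u (\<lambda>i. v i - c) = fcov n u v"
  using fcov_diff_const_left[of n v c u] by (simp add: fcov_commute)

lemma fcov_diff_right: "fcov n u (\<lambda>i. v i - v' i) = fcov n u v - fcov n u v'"
  using fcov_add_left[of n v "\<lambda>i. - v' i" u] fcov_mult_left[of n "-1" v' u]
  by (simp add: fcov_commute)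

lemma fcov_sum_left:
  "finite S \<Longrightarrow> fcov n (\<lambda>i. \<Sum>k\<in>S. u k i) v = (\<Sum>k\<in>S. fcov n (u k) v)"
  by (induction S rule: finite_induct) (simp_all add: fcov_const_left fcov_add_left)

lemma fcov_sum_right:
  "finite S \<Longrightarrow> fcov n u (\<lambda>i. \<Sum>k\<in>S. v k i) = (\<Sum>k\<in>S. fcov n u (v k))"
  using fcov_sum_left[of S n v u] by (simp add: fcov_commute)

lemma fcov_centered:
  assumes "(\<Sum>i<n. u i) = 0"
  shows "fcov n u v = (\<Sum>i<n. u i * v i) / (real n - 1)"
proof -
  have "(\<Sum>i<n. u i * (v i - fmean n v)) = (\<Sum>i<n. u i * v i)"
    using assms by (simp add: right_diff_distrib sum_subtractf sum_distrib_right[symmetric])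
  moreover have "fmean n u = 0" using assms unfolding fmean_def by simp
  ultimately show ?thesis unfolding fcov_def by simp
qed

definition scov :: "(nat \<Rightarrow> nat) set \<Rightarrow> ((nat \<Rightarrow> nat) \<Rightarrow> real) \<Rightarrow> ((nat \<Rightarrow> nat) \<Rightarrow> real) \<Rightarrow> real" where
  "scov Om X W = Ex Om (\<lambda>z. (X z - Ex Om X) * (W z - Ex Om W))"

lemma Covm_index:
  "j < d1 \<Longrightarrow> k < d2 \<Longrightarrow> Covm d1 d2 Om X W $$ (j, k) = scov Om (\<lambda>z. X z $ j) (\<lambda>z. W z $ k)"
  unfolding Covm_def scov_def by simp

lemma dim_Covm [simp]: "dim_row (Covm d1 d2 Om X W) = d1" "dim_col (Covm d1 d2 Om X W) = d2"
  unfolding Covm_def by simp_all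

lemma Ex_cong: "(\<And>z. z \<in> Om \<Longrightarrow> X z = X' z) \<Longrightarrow> Ex Om X = Ex Om X'"
  unfolding Ex_def by simp

lemma scov_cong:
  assumes "\<And>z. z \<in> Om \<Longrightarrow> X z = X' z" and "\<And>z. z \<in> Om \<Longrightarrow> W z = W' z"
  shows "scov Om X W = scov Om X' W'"
  using Ex_cong[of Om X X'] Ex_cong[of Om W W'] assms unfolding scov_def
  by (intro Ex_cong) simp

lemma Covm_cong:
  assumes "\<And>z. z \<in> Om \<Longrightarrow> X z = X' z" and "\<And>z. z \<in> Om \<Longrightarrow> W z = W' z"
  shows "Covm d1 d2 Om X W = Covm d1 d2 Om X' W'"
proof (rule eq_matI)
  fix j k assume "j < dim_row (Covm d1 d2 Om X' W')" "k < dim_col (Covm d1 d2 Om X' W')"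
  then show "Covm d1 d2 Om X W $$ (j, k) = Covm d1 d2 Om X' W' $$ (j, k)"
    using assms by (simp add: Covm_index cong: scov_cong)
qed simp_all

lemma Ex_lincomb: "Ex Om (\<lambda>z. \<Sum>r\<in>R. c r * X r z) = (\<Sum>r\<in>R. c r * Ex Om (X r))"
  unfolding Ex_def
  by (simp add: sum.swap[of _ Om] sum_distrib_left sum_divide_distrib mult.assoc)

lemma Ex_diff_const:
  assumes "finite Om" "Om \<noteq> {}"
  shows "Ex Om (\<lambda>z. X z - c) = Ex Om X - c"
  using assms unfolding Ex_def by (simp add: sum_subtractf diff_divide_distrib)

lemma scov_lincomb_left:
  "scov Om (\<lambda>z. \<Sum>r\<in>R. c r * X r z) W = (\<Sum>r\<in>R. c r * scov Om (X r) W)"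
proof -
  have "(\<Sum>r\<in>R. c r * X r z) - Ex Om (\<lambda>z. \<Sum>r\<in>R. c r * X r z)
      = (\<Sum>r\<in>R. c r * (X r z - Ex Om (X r)))" for z
    unfolding Ex_lincomb by (simp add: right_diff_distrib sum_subtractf)
  then show ?thesis
    unfolding scov_def by (simp add: sum_distrib_right mult.assoc Ex_lincomb)
qed

lemma scov_diff_const:
  assumes "finite Om" "Om \<noteq> {}"
  shows "scov Om (\<lambda>z. X z - c) (\<lambda>z. W z - d) = scov Om X W"
  unfolding scov_def Ex_diff_const[OF assms] by simp

lemma scov_eq:
  assumes "finite Om" "Om \<noteq> {}"
  shows "scov Om X W = Ex Om (\<lambda>z. X z * W z) - Ex Om X * Ex Om W"
proof -
  define a b where "a = Ex Om X" and "b = Ex Om W"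
  have N: "real (card Om) > 0" using assms by (simp add: card_gt_0_iff)
  have "sum X Om = card Om * a" "sum W Om = card Om * b"
    using N unfolding a_def b_def Ex_def by simp_all
  then have "(\<Sum>z\<in>Om. (X z - a) * (W z - b)) = (\<Sum>z\<in>Om. X z * W z) - card Om * (a * b)"
    by (simp add: algebra_simps sum.distrib sum_subtractf sum_distrib_left[symmetric])
  then show ?thesis
    using N unfolding scov_def a_def[symmetric] b_def[symmetric]
    by (simp add: Ex_def[of Om "\<lambda>z. (X z - a) * (W z - b)"] Ex_def[of Om "\<lambda>z. X z * W z"]
        diff_divide_distrib)
qed

section \<open>Matrices and Kronecker products\<close>

lemma index_mult_mat_sum:
  "i < dim_row A \<Longrightarrow> j < dim_col B \<Longrightarrow> dim_col A = dim_row B \<Longrightarrow>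
   (A * B) $$ (i, j) = (\<Sum>k<dim_row B. A $$ (i, k) * B $$ (k, j))"
  by (simp add: scalar_prod_def atLeast0LessThan)

lemma index_mult_mat_vec_sum:
  "i < dim_row A \<Longrightarrow> dim_col A = dim_vec v \<Longrightarrow> (A *\<^sub>v v) $ i = (\<Sum>k<dim_vec v. A $$ (i, k) * v $ k)"
  by (simp add: scalar_prod_def atLeast0LessThan)

lemma Covm_mult_mat_vec_left:
  assumes C: "C \<in> carrier_mat d1 d2"
    and X: "\<And>z. z \<in> Om \<Longrightarrow> X z = C *\<^sub>v W z"
    and W: "\<And>z. z \<in> Om \<Longrightarrow> W z \<in> carrier_vec d2"
  shows "Covm d1 d3 Om X V = C * Covm d2 d3 Om W V"
proof (rule eq_matI)
  fix j k assume "j < dim_row (C * Covm d2 d3 Om W V)" "k < dim_col (C * Covm d2 d3 Om W V)"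
  then have j: "j < d1" and k: "k < d3" using C by (simp_all add: Covm_def)
  have "Covm d1 d3 Om X V $$ (j, k) = scov Om (\<lambda>z. \<Sum>r<d2. C $$ (j, r) * W z $ r) (\<lambda>z. V z $ k)"
  proof (unfold Covm_index[OF j k], intro scov_cong refl)
    fix z assume z: "z \<in> Om"
    have "dim_vec (W z) = d2" using W[OF z] by (simp add: carrier_vecD)
    then show "X z $ j = (\<Sum>r<d2. C $$ (j, r) * W z $ r)"
      unfolding X[OF z] using C j by (subst index_mult_mat_vec_sum) auto
  qed
  also have "\<dots> = (\<Sum>r<d2. C $$ (j, r) * scov Om (\<lambda>z. W z $ r) (\<lambda>z. V z $ k))"
    by (rule scov_lincomb_left)
  also have "\<dots> = (C * Covm d2 d3 Om W V) $$ (j, k)"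
    using C j k by (subst index_mult_mat_sum) (simp_all add: Covm_index)
  finally show "Covm d1 d3 Om X V $$ (j, k) = (C * Covm d2 d3 Om W V) $$ (j, k)" .
qed (use C in simp_all)

lemma mat_inv_eqI:
  fixes A B :: "real mat"
  assumes A: "A \<in> carrier_mat n n" and B: "B \<in> carrier_mat n n" and AB: "A * B = 1\<^sub>m n"
  shows "mat_inv A = B"
proof (cases "mat_inverse A")
  case None
  have "B * A = 1\<^sub>m n" using mat_mult_left_right_inverse[OF A B AB] .
  then have "A \<in> Units (ring_mat TYPE(real) n undefined)"
    using A B AB unfolding Units_def by (auto simp: ring_mat_simps)
  with mat_inverse(1)[OF A None, of undefined] show ?thesis by blast
next
  case (Some B')
  from mat_inverse(2)[OF A Some] have B': "B' * A = 1\<^sub>m n" "B' \<in> carrier_mat n n" by auto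
  have "B' = B' * (A * B)" using B'(2) AB by simp
  also have "\<dots> = B" using A B B' by (simp add: assoc_mult_mat[symmetric, of B' n n A n B])
  finally show ?thesis unfolding mat_inv_def Some by simp
qed

lemma mult_add_less_mult_nat:
  fixes u v b d :: nat
  assumes "u < b" "v < d"
  shows "u * d + v < b * d"
proof -
  have "u * d + v < Suc u * d" using assms(2) by simp
  also have "\<dots> \<le> b * d" using assms(1) by (intro mult_right_mono) auto
  finally show ?thesis .
qed

lemma sum_lessThan_mult_nat:
  fixes \<phi> :: "nat \<Rightarrow> 'a::comm_monoid_add"
  shows "(\<Sum>r<a * b. \<phi> r) = (\<Sum>f<a. \<Sum>l<b. \<phi> (f * b + l))"
proof -
  have "sum \<phi> {f * b..<f * b + b} = (\<Sum>l<b. \<phi> (f * b + l))" for f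
    using sum.shift_bounds_nat_ivl[of \<phi> 0 "f * b" b] by (simp add: atLeast0LessThan add.commute)
  then show ?thesis using sum.nat_group[of \<phi> b a] by (simp add: mult.commute)
qed

lemma kron_carrier: "kron A B \<in> carrier_mat (dim_row A * dim_row B) (dim_col A * dim_col B)"
  unfolding kron_def by simp

lemma kron_index:
  "i < dim_row A * dim_row B \<Longrightarrow> j < dim_col A * dim_col B \<Longrightarrow>
   kron A B $$ (i, j) = A $$ (i div dim_row B, j div dim_col B) * B $$ (i mod dim_row B, j mod dim_col B)"
  unfolding kron_def by simp

lemma kron_mult:
  fixes A B C D :: "real mat"
  assumes A: "A \<in> carrier_mat a b" and B: "B \<in> carrier_mat c d"
    and C: "C \<in> carrier_mat b e" and D: "D \<in> carrier_mat d k"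
  shows "kron A B * kron C D = kron (A * C) (B * D)"
proof (rule eq_matI)
  fix i j assume "i < dim_row (kron (A * C) (B * D))" "j < dim_col (kron (A * C) (B * D))"
  then have i: "i < a * c" and j: "j < e * k" using A B C D by (simp_all add: kron_def)
  then have "c > 0" "k > 0" by (auto intro: gr0I)
  with i j have ij: "i div c < a" "i mod c < c" "j div k < e" "j mod k < k"
    by (simp_all add: less_mult_imp_div_less mult.commute)
  have "(kron A B * kron C D) $$ (i, j) = (\<Sum>t<b * d. kron A B $$ (i, t) * kron C D $$ (t, j))"
    using A B C D i j by (subst index_mult_mat_sum) (simp_all add: kron_def)
  also have "\<dots> = (\<Sum>u<b. \<Sum>v<d. A $$ (i div c, u) * C $$ (u, j div k) * (B $$ (i mod c, v) * D $$ (v, j mod k)))"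
    unfolding sum_lessThan_mult_nat
  proof (intro sum.cong refl)
    fix u v assume "u \<in> {..<b}" "v \<in> {..<d}"
    then have "u * d + v < b * d" by (simp add: mult_add_less_mult_nat)
    then show "kron A B $$ (i, u * d + v) * kron C D $$ (u * d + v, j)
        = A $$ (i div c, u) * C $$ (u, j div k) * (B $$ (i mod c, v) * D $$ (v, j mod k))"
      using A B C D i j \<open>v \<in> {..<d}\<close> by (simp add: kron_index)
  qed
  also have "\<dots> = (A * C) $$ (i div c, j div k) * (B * D) $$ (i mod c, j mod k)"
    using A B C D ij by (simp add: index_mult_mat_sum sum_product del: index_mult_mat)
  also have "\<dots> = kron (A * C) (B * D) $$ (i, j)"
    using A B C D i j by (simp add: kron_index)
  finally show "(kron A B * kron C D) $$ (i, j) = kron (A * C) (B * D) $$ (i, j)" .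
qed (use A B C D in \<open>simp_all add: kron_def\<close>)

lemma kron_one: "kron (1\<^sub>m a) (1\<^sub>m b) = (1\<^sub>m (a * b) :: real mat)"
proof (rule eq_matI)
  fix i j assume "i < dim_row (1\<^sub>m (a * b) :: real mat)" "j < dim_col (1\<^sub>m (a * b) :: real mat)"
  then have "i < a * b" "j < a * b" "b > 0" by (auto intro: gr0I)
  moreover have "(i div b = j div b \<and> i mod b = j mod b) = (i = j)" by (metis div_mult_mod_eq)
  ultimately show "kron (1\<^sub>m a) (1\<^sub>m b) $$ (i, j) = (1\<^sub>m (a * b) :: real mat) $$ (i, j)"
    by (auto simp: kron_index less_mult_imp_div_less mult.commute)
qed (simp_all add: kron_def)

lemma dim_outer [simp]: "dim_row (outer u v) = dim_vec u" "dim_col (outer u v) = dim_vec v"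
  unfolding outer_def by simp_all

lemma outer_index: "i < dim_vec u \<Longrightarrow> j < dim_vec v \<Longrightarrow> outer u v $$ (i, j) = u $ i * v $ j"
  unfolding outer_def by simp

section \<open>Orthogonality of the factorial contrasts\<close>

locale factorial_design =
  fixes K :: nat and iota :: "nat \<Rightarrow> nat \<Rightarrow> int" and eff :: "nat \<Rightarrow> nat set"
  assumes K_pos: "1 \<le> K"
    and iota_bij: "bij_betw (\<lambda>q. \<lambda>k\<in>{1..K}. iota q k) {..<2^K} ({1..K} \<rightarrow>\<^sub>E {-1, 1})"
    and eff_bij: "bij_betw eff {..<2^K - 1} {A. A \<subseteq> {1..K} \<and> A \<noteq> {}}"
begin

abbreviation g :: "nat \<Rightarrow> nat \<Rightarrow> real" where
  "g \<equiv> gcoef eff iota"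

lemma iota_cases: "q < 2^K \<Longrightarrow> k \<in> {1..K} \<Longrightarrow> iota q k = -1 \<or> iota q k = 1"
  using bij_betwE[OF iota_bij] by (fastforce simp: PiE_iff)

lemma iota_distinct:
  assumes "q < 2^K" "p < 2^K" "q \<noteq> p"
  obtains k where "k \<in> {1..K}" "iota q k \<noteq> iota p k"
proof -
  have "(\<lambda>k\<in>{1..K}. iota q k) \<noteq> (\<lambda>k\<in>{1..K}. iota p k)"
    using assms bij_betw_imp_inj_on[OF iota_bij] by (auto dest: inj_onD)
  then show ?thesis using that by (auto simp: restrict_def fun_eq_iff split: if_splits)
qed

lemma eff_subset: "f < 2^K - 1 \<Longrightarrow> eff f \<subseteq> {1..K}"
  and eff_nonempty: "f < 2^K - 1 \<Longrightarrow> eff f \<noteq> {}"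
  using bij_betwE[OF eff_bij] by auto

lemma sum_monomial_mult_monomial:
  assumes A: "A \<subseteq> {1..K}" and A': "A' \<subseteq> {1..K}"
  shows "(\<Sum>q<2^K. (\<Prod>k\<in>A. real_of_int (iota q k)) * (\<Prod>k\<in>A'. real_of_int (iota q k)))
     = (if A = A' then 2^K else 0)"
proof -
  define phi where "phi k x = (if k \<in> A then x else 1) * (if k \<in> A' then x else (1::real))" for k x
  have restrict: "(\<Prod>k\<in>{1..K}. if k \<in> B then real_of_int (s k) else 1) = (\<Prod>k\<in>B. real_of_int (s k))"
    if "B \<subseteq> {1..K}" for B and s :: "nat \<Rightarrow> int"
    using that prod.inter_restrict[of "{1..K}" "\<lambda>k. real_of_int (s k)" B] by (simp add: Int_absorb1)
  have "(\<Prod>k\<in>A. real_of_int (s k)) * (\<Prod>k\<in>A'. real_of_int (s k))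
      = (\<Prod>k\<in>{1..K}. phi k (real_of_int (s k)))" for s :: "nat \<Rightarrow> int"
    unfolding phi_def prod.distrib restrict[OF A] restrict[OF A'] ..
  then have "(\<Sum>q<2^K. (\<Prod>k\<in>A. real_of_int (iota q k)) * (\<Prod>k\<in>A'. real_of_int (iota q k)))
     = (\<Sum>q<2^K. (\<lambda>s. \<Prod>k\<in>{1..K}. phi k (real_of_int (s k))) (\<lambda>k\<in>{1..K}. iota q k))"
    by (intro sum.cong refl) (auto intro!: prod.cong)
  also have "\<dots> = (\<Sum>s\<in>{1..K} \<rightarrow>\<^sub>E {-1, 1}. \<Prod>k\<in>{1..K}. phi k (real_of_int (s k)))"
    by (rule sum.reindex_bij_betw[OF iota_bij])
  also have "\<dots> = (\<Prod>k\<in>{1..K}. \<Sum>y\<in>{-1, 1::int}. phi k (real_of_int y))"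
    by (rule prod_sum_PiE[symmetric]) auto
  also have "\<dots> = (\<Prod>k\<in>{1..K}. if (k \<in> A) = (k \<in> A') then 2 else 0)"
    by (intro prod.cong refl) (auto simp: phi_def)
  also have "\<dots> = (if A = A' then 2^K else 0)"
  proof (cases "A = A'")
    case False
    then obtain k where "k \<in> {1..K}" "(k \<in> A) \<noteq> (k \<in> A')" using A A' by blast
    then show ?thesis using False by (intro trans[OF prod_zero]) auto
  qed simp
  finally show ?thesis .
qed

lemma sum_gcoef_mult_gcoef:
  "f < 2^K - 1 \<Longrightarrow> f' < 2^K - 1 \<Longrightarrow> (\<Sum>q<2^K. g f q * g f' q) = (if f = f' then 2^K else 0)"
  unfolding gcoef_def using sum_monomial_mult_monomial[OF eff_subset eff_subset, of f f']
    bij_betw_imp_inj_on[OF eff_bij] by (auto simp: inj_on_def)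

lemma sum_gcoef: "f < 2^K - 1 \<Longrightarrow> (\<Sum>q<2^K. g f q) = 0"
  unfolding gcoef_def using sum_monomial_mult_monomial[OF eff_subset, of f "{}"] eff_nonempty by auto

text \<open>Adding the empty effect, the sum over all subsets of \<open>{1..K}\<close> factors as
  \<open>\<Prod>k. 1 + \<iota>\<^sub>k(q) \<iota>\<^sub>k(p)\<close>, which is \<open>2^K\<close> or \<open>0\<close>.\<close>

lemma sum_effects_gcoef_mult_gcoef:
  assumes q: "q < 2^K" and p: "p < 2^K"
  shows "(\<Sum>f<2^K - 1. g f q * g f p) = (if q = p then 2^K else 0) - 1"
proof -
  define t where "t k = real_of_int (iota q k) * real_of_int (iota p k)" for k
  have "(\<Sum>f<2^K - 1. g f q * g f p) = (\<Sum>f<2^K - 1. (\<lambda>A. \<Prod>k\<in>A. t k) (eff f))"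
    unfolding gcoef_def t_def by (simp add: prod.distrib)
  also have "\<dots> = (\<Sum>A\<in>{A. A \<subseteq> {1..K} \<and> A \<noteq> {}}. \<Prod>k\<in>A. t k)"
    by (rule sum.reindex_bij_betw[OF eff_bij])
  also have "\<dots> = (\<Sum>A\<in>Pow {1..K}. \<Prod>k\<in>A. t k) - 1"
  proof -
    have "Pow {1..K} = insert {} {A. A \<subseteq> {1..K} \<and> A \<noteq> {}}" by auto
    then show ?thesis by simp
  qed
  also have "(\<Sum>A\<in>Pow {1..K}. \<Prod>k\<in>A. t k) = (\<Prod>k\<in>{1..K}. t k + 1)"
    using prod_add[of "{1..K}" t "\<lambda>_. 1"] by simp
  also have "\<dots> = (if q = p then 2^K else 0)"
  proof (cases "q = p")
    case True
    then have "t k + 1 = 2" if "k \<in> {1..K}" for k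
      using iota_cases[OF q that] unfolding t_def by fastforce
    then show ?thesis using True by simp
  next
    case False
    then obtain k where k: "k \<in> {1..K}" "iota q k \<noteq> iota p k" using iota_distinct[OF q p] by blast
    then have "t k + 1 = 0" using iota_cases[OF q k(1)] iota_cases[OF p k(1)] unfolding t_def by auto
    then show ?thesis using False k by (intro trans[OF prod_zero]) auto
  qed
  finally show ?thesis .
qed

lemma two_pow_K: "(2::real)^K = 2 * 2^(K - 1)"
  using K_pos by (simp add: power_eq_if)

end

section \<open>Moments under complete randomization\<close>

lemma assignments_nonempty:
  "(\<Sum>q<Q. m q) = N \<Longrightarrow> assignments N Q m \<noteq> {}"
proof (induction Q arbitrary: N)
  case 0
  then show ?case by (auto simp: assignments_def intro!: exI[of _ "\<lambda>_. undefined"])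
next
  case (Suc Q)
  define N' where "N' = (\<Sum>q<Q. m q)"
  have N: "N = N' + m Q" using Suc.prems N'_def by simp
  obtain z' where z': "z' \<in> {..<N'} \<rightarrow>\<^sub>E {..<Q}" "\<forall>q<Q. card {i. i < N' \<and> z' i = q} = m q"
    using Suc.IH[OF N'_def[symmetric]] unfolding assignments_def by blast
  define z where "z i = (if i < N' then z' i else if i < N then Q else undefined)" for i
  have "z \<in> {..<N} \<rightarrow>\<^sub>E {..<Suc Q}"
    using z'(1) N unfolding PiE_iff extensional_def by (auto simp: z_def less_Suc_eq)
  moreover have "card {i. i < N \<and> z i = q} = m q" if q: "q < Suc Q" for q
  proof (cases "q < Q")
    case True
    then have "{i. i < N \<and> z i = q} = {i. i < N' \<and> z' i = q}" using N by (auto simp: z_def)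
    then show ?thesis using z'(2) True by simp
  next
    case False
    with q have "q = Q" by simp
    then have "{i. i < N \<and> z i = q} = {N'..<N}" using z'(1) N by (auto simp: z_def PiE_iff)
    then show ?thesis using N \<open>q = Q\<close> by simp
  qed
  ultimately show ?case unfolding assignments_def by blast
qed

lemma comp_transpose_in_assignments:
  assumes z: "z \<in> assignments n Q nq" and a: "a < n" and b: "b < n"
  shows "z \<circ> Transposition.transpose a b \<in> assignments n Q nq"
proof -
  let ?t = "Transposition.transpose a b"
  have t_lt: "?t i < n \<longleftrightarrow> i < n" for i
    using a b by (cases "i = a \<or> i = b") auto
  have "z \<in> {..<n} \<rightarrow>\<^sub>E {..<Q}" using z unfolding assignments_def by simp
  then have "z \<circ> ?t \<in> {..<n} \<rightarrow>\<^sub>E {..<Q}"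
    using t_lt a b unfolding PiE_iff extensional_def by auto
  moreover have "{i. i < n \<and> (z \<circ> ?t) i = q} = ?t ` {i. i < n \<and> z i = q}" for q
    unfolding in_transpose_image_iff set_eq_iff using t_lt by simp
  then have "card {i. i < n \<and> (z \<circ> ?t) i = q} = card {i. i < n \<and> z i = q}" for q
    by (simp add: card_image)
  ultimately show ?thesis using z unfolding assignments_def by simp
qed

lemma sum_assignments_comp_transpose:
  assumes "a < n" "b < n"
  shows "(\<Sum>z\<in>assignments n Q nq. \<phi> z) = (\<Sum>z\<in>assignments n Q nq. \<phi> (z \<circ> Transposition.transpose a b))"
proof -
  have "z \<circ> Transposition.transpose a b \<circ> Transposition.transpose a b = z" for z :: "nat \<Rightarrow> nat"
    by (simp add: fun_eq_iff)
  then show ?thesis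
    by (intro sum.reindex_bij_witness[where i="\<lambda>z. z \<circ> Transposition.transpose a b"
          and j="\<lambda>z. z \<circ> Transposition.transpose a b"])
      (simp_all add: comp_transpose_in_assignments assms)
qed

locale complete_randomization =
  fixes Q n :: nat and nq :: "nat \<Rightarrow> nat"
  assumes nq_pos: "\<And>q. q < Q \<Longrightarrow> 1 \<le> nq q"
    and nq_sum: "(\<Sum>q<Q. nq q) = n"
    and two_le_n: "2 \<le> n"
begin

abbreviation Om :: "(nat \<Rightarrow> nat) set" where
  "Om \<equiv> assignments n Q nq"

lemma finite_Om: "finite Om"
  by (rule finite_subset[of _ "{..<n} \<rightarrow>\<^sub>E {..<Q}"]) (auto simp: assignments_def finite_PiE)

lemma Om_nonempty: "Om \<noteq> {}"
  by (rule assignments_nonempty[OF nq_sum])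

lemma card_Om_pos: "real (card Om) > 0"
  using finite_Om Om_nonempty by (simp add: card_gt_0_iff)

lemma Om_range: "z \<in> Om \<Longrightarrow> i < n \<Longrightarrow> z i < Q"
  unfolding assignments_def by (auto simp: PiE_iff)

lemma card_group: "z \<in> Om \<Longrightarrow> q < Q \<Longrightarrow> card {i. i < n \<and> z i = q} = nq q"
  unfolding assignments_def by auto

lemma nq_nonzero: "q < Q \<Longrightarrow> nq q \<noteq> 0"
  using nq_pos[of q] by simp

lemma sum_units_comp:
  assumes z: "z \<in> Om"
  shows "(\<Sum>i<n. \<phi> (z i)) = (\<Sum>q<Q. real (nq q) * \<phi> q)"
proof -
  have "(\<Sum>i<n. \<phi> (z i)) = (\<Sum>q<Q. \<Sum>i\<in>{i \<in> {..<n}. z i = q}. \<phi> (z i))"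
    using Om_range[OF z] by (intro sum.group[symmetric]) auto
  also have "\<dots> = (\<Sum>q<Q. real (nq q) * \<phi> q)"
  proof (intro sum.cong refl)
    fix q assume "q \<in> {..<Q}"
    then have "card {i \<in> {..<n}. z i = q} = nq q" using card_group[OF z] by simp
    then show "(\<Sum>i\<in>{i \<in> {..<n}. z i = q}. \<phi> (z i)) = real (nq q) * \<phi> q" by simp
  qed
  finally show ?thesis .
qed

lemma sum_distinct_units_comp:
  assumes z: "z \<in> Om"
  shows "(\<Sum>i<n. \<Sum>j\<in>{..<n} - {i}. \<phi> (z i) (z j))
    = (\<Sum>q<Q. \<Sum>q'<Q. real (nq q) * (real (nq q') - of_bool (q = q')) * \<phi> q q')"
proof -
  have "(\<Sum>i<n. \<Sum>j\<in>{..<n} - {i}. \<phi> (z i) (z j))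
      = (\<Sum>i<n. \<Sum>j<n. \<phi> (z i) (z j)) - (\<Sum>i<n. \<phi> (z i) (z i))"
    by (simp add: sum_diff1 sum_subtractf)
  also have "(\<Sum>i<n. \<Sum>j<n. \<phi> (z i) (z j)) = (\<Sum>q<Q. real (nq q) * (\<Sum>q'<Q. real (nq q') * \<phi> q q'))"
    unfolding sum_units_comp[OF z] by (rule sum_units_comp[OF z])
  also have "(\<Sum>i<n. \<phi> (z i) (z i)) = (\<Sum>q<Q. real (nq q) * \<phi> q q)"
    by (rule sum_units_comp[OF z])
  also have "(\<Sum>q<Q. real (nq q) * (\<Sum>q'<Q. real (nq q') * \<phi> q q')) - (\<Sum>q<Q. real (nq q) * \<phi> q q)
      = (\<Sum>q<Q. \<Sum>q'<Q. real (nq q) * (real (nq q') - of_bool (q = q')) * \<phi> q q')"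
  proof -
    have "real (nq q) * (real (nq q') - of_bool (q = q')) * \<phi> q q'
        = real (nq q) * (real (nq q') * \<phi> q q') - (if q' = q then real (nq q) * \<phi> q q' else 0)" for q q'
      by (simp add: algebra_simps)
    then show ?thesis by (simp add: sum_subtractf sum_distrib_left)
  qed
  finally show ?thesis .
qed

lemma sum_Om_unit_symmetric:
  assumes i: "i < n"
  shows "(\<Sum>z\<in>Om. \<phi> (z i)) = (\<Sum>z\<in>Om. \<phi> (z 0))"
  using sum_assignments_comp_transpose[where a=0 and b=i and \<phi>="\<lambda>z. \<phi> (z 0)"] i two_le_n by simp

lemma sum_Om_pair_symmetric:
  assumes i: "i < n" and j: "j < n" and ij: "i \<noteq> j"
  shows "(\<Sum>z\<in>Om. \<phi> (z i) (z j)) = (\<Sum>z\<in>Om. \<phi> (z 0) (z 1))"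
proof -
  define j' where "j' = Transposition.transpose 0 i j"
  have j': "j' < n" "j' \<noteq> 0" using i j ij two_le_n by (auto simp: j'_def transpose_def)
  have "(\<Sum>z\<in>Om. \<phi> (z 0) (z 1)) = (\<Sum>z\<in>Om. \<phi> (z 0) (z j'))"
    using sum_assignments_comp_transpose[where a=1 and b=j' and \<phi>="\<lambda>z. \<phi> (z 0) (z 1)"] j' two_le_n by simp
  also have "\<dots> = (\<Sum>z\<in>Om. \<phi> (z i) (z j))"
    using sum_assignments_comp_transpose[where a=0 and b=i and \<phi>="\<lambda>z. \<phi> (z 0) (z j')"] i two_le_n
    by (simp add: j'_def)
  finally show ?thesis by simp
qed

lemma sum_Om_unit:
  assumes i: "i < n"
  shows "(\<Sum>z\<in>Om. \<phi> (z i)) = card Om / n * (\<Sum>q<Q. real (nq q) * \<phi> q)"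
proof -
  have "(\<Sum>i<n. \<Sum>z\<in>Om. \<phi> (z i)) = (\<Sum>i<n. \<Sum>z\<in>Om. \<phi> (z 0))"
    by (intro sum.cong refl sum_Om_unit_symmetric) simp
  then have "n * (\<Sum>z\<in>Om. \<phi> (z 0)) = (\<Sum>z\<in>Om. \<Sum>i<n. \<phi> (z i))"
    by (simp add: sum.swap[of _ Om])
  also have "\<dots> = card Om * (\<Sum>q<Q. real (nq q) * \<phi> q)" by (simp add: sum_units_comp)
  finally show ?thesis using sum_Om_unit_symmetric[OF i, of \<phi>] two_le_n by (simp add: field_simps)
qed

lemma sum_Om_pair:
  assumes i: "i < n" and j: "j < n" and ij: "i \<noteq> j"
  shows "(\<Sum>z\<in>Om. \<phi> (z i) (z j))
    = card Om / (n * (real n - 1)) * (\<Sum>q<Q. \<Sum>q'<Q. real (nq q) * (real (nq q') - of_bool (q = q')) * \<phi> q q')"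
proof -
  have "(\<Sum>i<n. \<Sum>j\<in>{..<n} - {i}. \<Sum>z\<in>Om. \<phi> (z i) (z j))
      = (\<Sum>i<n. \<Sum>j\<in>{..<n} - {i}. \<Sum>z\<in>Om. \<phi> (z 0) (z 1))"
    by (intro sum.cong refl sum_Om_pair_symmetric) auto
  then have "n * (real n - 1) * (\<Sum>z\<in>Om. \<phi> (z 0) (z 1))
      = (\<Sum>i<n. \<Sum>j\<in>{..<n} - {i}. \<Sum>z\<in>Om. \<phi> (z i) (z j))"
    using two_le_n by (simp add: of_nat_diff)
  also have "\<dots> = (\<Sum>z\<in>Om. \<Sum>i<n. \<Sum>j\<in>{..<n} - {i}. \<phi> (z i) (z j))"
    by (subst sum.swap) (simp add: sum.swap[of _ Om])
  also have "\<dots> = card Om * (\<Sum>q<Q. \<Sum>q'<Q. real (nq q) * (real (nq q') - of_bool (q = q')) * \<phi> q q')"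
    by (simp add: sum_distinct_units_comp)
  finally show ?thesis using sum_Om_pair_symmetric[OF i j ij, of \<phi>] two_le_n by (simp add: field_simps)
qed

lemma sum_Yhat_eq_sum_units:
  assumes z: "z \<in> Om"
  shows "(\<Sum>q<Q. Yhat n nq u z q) = (\<Sum>i<n. u i (z i) / nq (z i))"
proof -
  have "(\<Sum>i<n. u i (z i) / nq (z i)) = (\<Sum>q<Q. \<Sum>i\<in>{i \<in> {..<n}. z i = q}. u i (z i) / nq (z i))"
    using Om_range[OF z] by (intro sum.group[symmetric]) auto
  also have "\<dots> = (\<Sum>q<Q. Yhat n nq u z q)"
    unfolding Yhat_def sum_divide_distrib by (intro sum.cong) auto
  finally show ?thesis ..
qed

lemma sum_nq_mult_Yhat:
  assumes z: "z \<in> Om"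
  shows "(\<Sum>q<Q. nq q * Yhat n nq u z q) = (\<Sum>i<n. u i (z i))"
proof -
  have "(\<Sum>i<n. u i (z i)) = (\<Sum>q<Q. \<Sum>i\<in>{i \<in> {..<n}. z i = q}. u i (z i))"
    using Om_range[OF z] by (intro sum.group[symmetric]) auto
  also have "\<dots> = (\<Sum>q<Q. nq q * Yhat n nq u z q)"
    unfolding Yhat_def by (intro sum.cong) (auto simp: nq_nonzero)
  finally show ?thesis ..
qed

lemma Ex_sum_Yhat: "Ex Om (\<lambda>z. \<Sum>q<Q. Yhat n nq u z q) = (\<Sum>q<Q. fmean n (\<lambda>i. u i q))"
proof -
  have "(\<Sum>z\<in>Om. \<Sum>i<n. u i (z i) / nq (z i)) = (\<Sum>i<n. \<Sum>z\<in>Om. u i (z i) / nq (z i))"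
    by (rule sum.swap)
  also have "\<dots> = (\<Sum>i<n. card Om / n * (\<Sum>q<Q. u i q))"
  proof (rule sum.cong[OF refl])
    fix i assume "i \<in> {..<n}"
    then have "(\<Sum>z\<in>Om. u i (z i) / nq (z i)) = card Om / n * (\<Sum>q<Q. nq q * (u i q / nq q))"
      by (intro sum_Om_unit) simp
    moreover have "(\<Sum>q<Q. nq q * (u i q / nq q)) = (\<Sum>q<Q. u i q)"
      by (intro sum.cong refl) (simp add: nq_nonzero)
    ultimately show "(\<Sum>z\<in>Om. u i (z i) / nq (z i)) = card Om / n * (\<Sum>q<Q. u i q)"
      by simp
  qed
  also have "\<dots> = card Om * (\<Sum>q<Q. fmean n (\<lambda>i. u i q))"
    unfolding fmean_def
    by (simp add: sum_distrib_left[symmetric] sum_divide_distrib[symmetric] sum.swap[of _ "{..<n}"])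
  finally show ?thesis
    using card_Om_pos unfolding Ex_def by (simp add: sum_Yhat_eq_sum_units)
qed

lemma sum_Om_mult_sum_units:
  "(\<Sum>z\<in>Om. (\<Sum>i<n. a i (z i)) * (\<Sum>j<n. b j (z j)))
    = card Om / n * (\<Sum>i<n. \<Sum>q<Q. real (nq q) * (a i q * b i q))
      + card Om / (n * (real n - 1)) * (\<Sum>i<n. \<Sum>j\<in>{..<n} - {i}.
          \<Sum>q<Q. \<Sum>q'<Q. real (nq q) * (real (nq q') - of_bool (q = q')) * (a i q * b j q'))"
proof -
  have "(\<Sum>z\<in>Om. (\<Sum>i<n. a i (z i)) * (\<Sum>j<n. b j (z j)))
      = (\<Sum>i<n. \<Sum>j<n. \<Sum>z\<in>Om. a i (z i) * b j (z j))"
    unfolding sum_product by (subst sum.swap) (rule sum.cong[OF refl], rule sum.swap)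
  also have "\<dots> = (\<Sum>i<n. (\<Sum>z\<in>Om. a i (z i) * b i (z i))
      + (\<Sum>j\<in>{..<n} - {i}. \<Sum>z\<in>Om. a i (z i) * b j (z j)))"
    by (intro sum.cong refl) (simp add: sum.remove)
  also have "\<dots> = (\<Sum>i<n. card Om / n * (\<Sum>q<Q. real (nq q) * (a i q * b i q))
      + card Om / (n * (real n - 1)) * (\<Sum>j\<in>{..<n} - {i}.
          \<Sum>q<Q. \<Sum>q'<Q. real (nq q) * (real (nq q') - of_bool (q = q')) * (a i q * b j q')))"
    by (intro sum.cong refl arg_cong2[where f="(+)"])
      (auto simp: sum_Om_unit[where \<phi>="\<lambda>q. a _ q * b _ q"] sum_Om_pair[where \<phi>="\<lambda>q q'. a _ q * b _ q'"]
        sum_distrib_left)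
  finally show ?thesis by (simp add: sum.distrib sum_distrib_left)
qed

lemma sum_pair_weights_mult:
  "(\<Sum>q<Q. \<Sum>q'<Q. real (nq q) * (real (nq q') - of_bool (q = q')) * (a q / nq q * (b q' / nq q')))
    = (\<Sum>q<Q. a q) * (\<Sum>q<Q. b q) - (\<Sum>q<Q. a q * b q / nq q)"
proof -
  have "(\<Sum>q<Q. \<Sum>q'<Q. real (nq q) * (real (nq q') - of_bool (q = q')) * (a q / nq q * (b q' / nq q')))
      = (\<Sum>q<Q. \<Sum>q'<Q. a q * b q' - (if q' = q then a q * b q / nq q else 0))"
  proof (intro sum.cong refl)
    fix q q' assume "q \<in> {..<Q}" "q' \<in> {..<Q}"
    then have "real (nq q) \<noteq> 0" "real (nq q') \<noteq> 0" by (simp_all add: nq_nonzero)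
    then show "real (nq q) * (real (nq q') - of_bool (q = q')) * (a q / nq q * (b q' / nq q'))
        = a q * b q' - (if q' = q then a q * b q / nq q else 0)"
      by (cases "q = q'") (simp_all add: field_simps)
  qed
  then show ?thesis by (simp add: sum_subtractf sum_product)
qed

lemma Ex_sum_Yhat_mult_centered:
  assumes u0: "\<And>q. q < Q \<Longrightarrow> (\<Sum>i<n. u i q) = 0"
    and v0: "\<And>q. q < Q \<Longrightarrow> (\<Sum>i<n. v i q) = 0"
  shows "Ex Om (\<lambda>z. (\<Sum>q<Q. Yhat n nq u z q) * (\<Sum>q<Q. Yhat n nq v z q))
    = (\<Sum>q<Q. fcov n (\<lambda>i. u i q) (\<lambda>i. v i q) / nq q)
      - fcov n (\<lambda>i. \<Sum>q<Q. u i q) (\<lambda>i. \<Sum>q<Q. v i q) / n"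
proof -
  define U V where "U i = (\<Sum>q<Q. u i q)" and "V i = (\<Sum>q<Q. v i q)" for i
  define D where "D i j = (\<Sum>q<Q. u i q * v j q / nq q)" for i j
  have n: "real n > 1" using two_le_n by simp
  have U0: "(\<Sum>i<n. U i) = 0" and V0: "(\<Sum>i<n. V i) = 0"
    unfolding U_def V_def by (subst sum.swap, simp add: u0 v0)+
  have diag: "(\<Sum>q<Q. real (nq q) * (u i q / nq q * (v i q / nq q))) = D i i" for i
    unfolding D_def by (intro sum.cong refl) (simp add: nq_nonzero)
  have pair: "(\<Sum>q<Q. \<Sum>q'<Q. real (nq q) * (real (nq q') - of_bool (q = q')) * (u i q / nq q * (v j q' / nq q')))
      = U i * V j - D i j" for i j
    unfolding U_def V_def D_def by (rule sum_pair_weights_mult)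
  have "(\<Sum>i<n. \<Sum>j<n. D i j) = (\<Sum>q<Q. (\<Sum>i<n. u i q) * (\<Sum>j<n. v j q) / nq q)"
    unfolding D_def sum_product sum_divide_distrib
    by (subst sum.swap, rule sum.cong[OF refl], subst sum.swap, simp)
  then have off_diag: "(\<Sum>i<n. \<Sum>j\<in>{..<n} - {i}. U i * V j - D i j) = - (\<Sum>i<n. U i * V i - D i i)"
    using U0 V0 u0 by (simp add: sum_diff1 sum_subtractf sum_product[symmetric])
  have "Ex Om (\<lambda>z. (\<Sum>q<Q. Yhat n nq u z q) * (\<Sum>q<Q. Yhat n nq v z q))
      = (\<Sum>z\<in>Om. (\<Sum>i<n. u i (z i) / nq (z i)) * (\<Sum>j<n. v j (z j) / nq (z j))) / card Om"
    unfolding Ex_def by (simp add: sum_Yhat_eq_sum_units)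
  also have "\<dots> = (\<Sum>i<n. D i i) / n - (\<Sum>i<n. U i * V i - D i i) / (n * (real n - 1))"
    unfolding sum_Om_mult_sum_units[of "\<lambda>i q. u i q / nq q" "\<lambda>j q. v j q / nq q"] diag pair off_diag
    using card_Om_pos by (simp add: field_simps)
  also have "\<dots> = (\<Sum>i<n. D i i) / (real n - 1) - (\<Sum>i<n. U i * V i) / (real n - 1) / n"
    using n by (simp add: sum_subtractf divide_simps) (simp add: algebra_simps)
  also have "\<dots> = (\<Sum>q<Q. fcov n (\<lambda>i. u i q) (\<lambda>i. v i q) / nq q) - fcov n U V / n"
  proof -
    have "(\<Sum>q<Q. fcov n (\<lambda>i. u i q) (\<lambda>i. v i q) / nq q) = (\<Sum>i<n. D i i) / (real n - 1)"
      unfolding D_def sum_divide_distrib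
      by (subst sum.swap) (intro sum.cong refl, simp add: fcov_centered u0 sum_divide_distrib mult.commute)
    then show ?thesis using U0 by (simp add: fcov_centered)
  qed
  finally show ?thesis unfolding U_def V_def .
qed

lemma Yhat_diff_const:
  assumes "z \<in> Om" "q < Q"
  shows "Yhat n nq (\<lambda>i q. u i q - c q) z q = Yhat n nq u z q - c q"
  using card_group[OF assms] nq_nonzero[OF assms(2)] unfolding Yhat_def
  by (simp add: sum_subtractf diff_divide_distrib)

text \<open>Li and Ding's covariance formula for complete randomization; centering the potential
  outcomes reduces it to the centered case.\<close>

lemma scov_sum_Yhat:
  "scov Om (\<lambda>z. \<Sum>q<Q. Yhat n nq u z q) (\<lambda>z. \<Sum>q<Q. Yhat n nq v z q)
    = (\<Sum>q<Q. fcov n (\<lambda>i. u i q) (\<lambda>i. v i q) / nq q)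
      - fcov n (\<lambda>i. \<Sum>q<Q. u i q) (\<lambda>i. \<Sum>q<Q. v i q) / n"
proof -
  define mu mv where "mu q = fmean n (\<lambda>i. u i q)" and "mv q = fmean n (\<lambda>i. v i q)" for q
  define u' v' where "u' i q = u i q - mu q" and "v' i q = v i q - mv q" for i q
  have centered: "(\<Sum>i<n. u' i q) = 0" "(\<Sum>i<n. v' i q) = 0" for q
    using two_le_n unfolding u'_def v'_def mu_def mv_def fmean_def by (simp_all add: sum_subtractf)
  have shift: "(\<Sum>q<Q. Yhat n nq u' z q) = (\<Sum>q<Q. Yhat n nq u z q) - (\<Sum>q<Q. mu q)"
    "(\<Sum>q<Q. Yhat n nq v' z q) = (\<Sum>q<Q. Yhat n nq v z q) - (\<Sum>q<Q. mv q)" if "z \<in> Om" for z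
  proof -
    have "(\<lambda>i q. u i q - mu q) = u'" "(\<lambda>i q. v i q - mv q) = v'"
      by (intro ext, simp only: u'_def v'_def)+
    then show "(\<Sum>q<Q. Yhat n nq u' z q) = (\<Sum>q<Q. Yhat n nq u z q) - (\<Sum>q<Q. mu q)"
      "(\<Sum>q<Q. Yhat n nq v' z q) = (\<Sum>q<Q. Yhat n nq v z q) - (\<Sum>q<Q. mv q)"
      using Yhat_diff_const[OF that, of _ u mu] Yhat_diff_const[OF that, of _ v mv]
      by (simp_all add: sum_subtractf)
  qed
  have "scov Om (\<lambda>z. \<Sum>q<Q. Yhat n nq u z q) (\<lambda>z. \<Sum>q<Q. Yhat n nq v z q)
      = scov Om (\<lambda>z. \<Sum>q<Q. Yhat n nq u' z q) (\<lambda>z. \<Sum>q<Q. Yhat n nq v' z q)"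
    using scov_cong[OF shift] scov_diff_const[OF finite_Om Om_nonempty] by simp
  also have "\<dots> = Ex Om (\<lambda>z. (\<Sum>q<Q. Yhat n nq u' z q) * (\<Sum>q<Q. Yhat n nq v' z q))"
    using centered by (simp add: scov_eq[OF finite_Om Om_nonempty] Ex_sum_Yhat fmean_def)
  also have "\<dots> = (\<Sum>q<Q. fcov n (\<lambda>i. u' i q) (\<lambda>i. v' i q) / nq q)
      - fcov n (\<lambda>i. \<Sum>q<Q. u' i q) (\<lambda>i. \<Sum>q<Q. v' i q) / n"
    using centered by (rule Ex_sum_Yhat_mult_centered)
  also have "\<dots> = (\<Sum>q<Q. fcov n (\<lambda>i. u i q) (\<lambda>i. v i q) / nq q)
      - fcov n (\<lambda>i. \<Sum>q<Q. u i q) (\<lambda>i. \<Sum>q<Q. v i q) / n"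
    unfolding u'_def v'_def by (simp only: sum_subtractf fcov_diff_const_left fcov_diff_const_right)
  finally show ?thesis .
qed

end

section \<open>Linear projection on the covariates\<close>

lemma invertible_mat_inv:
  fixes A :: "real mat"
  assumes inv: "invertible_mat A" and A: "A \<in> carrier_mat n n"
  shows "mat_inv A \<in> carrier_mat n n" "A * mat_inv A = 1\<^sub>m n" "mat_inv A * A = 1\<^sub>m n"
proof -
  obtain B where "inverts_mat A B" "inverts_mat B A" using inv unfolding invertible_mat_def by blast
  then have AB: "A * B = 1\<^sub>m n" and BA: "B * A = 1\<^sub>m (dim_row B)"
    using A unfolding inverts_mat_def by auto
  have "dim_col B = n" using arg_cong[OF AB, of dim_col] by simp
  moreover have "dim_row B = n" using arg_cong[OF BA, of dim_col] A by simp
  ultimately have B: "B \<in> carrier_mat n n" by auto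
  show "mat_inv A \<in> carrier_mat n n" "A * mat_inv A = 1\<^sub>m n" "mat_inv A * A = 1\<^sub>m n"
    unfolding mat_inv_eqI[OF A B AB] using B AB mat_mult_left_right_inverse[OF A B AB] by auto
qed

locale linear_projection =
  fixes n L :: nat and Y x :: "nat \<Rightarrow> nat \<Rightarrow> real"
  assumes Sxx_invertible: "invertible_mat (Sxx n L x)"
begin

lemma Sxx_carrier: "Sxx n L x \<in> carrier_mat L L"
  unfolding Sxx_def by simp

lemma Sxx_index: "m < L \<Longrightarrow> l < L \<Longrightarrow> Sxx n L x $$ (m, l) = fcov n (\<lambda>i. x i m) (\<lambda>i. x i l)"
  unfolding Sxx_def by simp

lemmas Sxx_inv = invertible_mat_inv[OF Sxx_invertible Sxx_carrier]

lemma Sqx_index: "l < L \<Longrightarrow> Sqx n L W x q $$ (0, l) = fcov n (\<lambda>i. W i q) (\<lambda>i. x i l)"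
  unfolding Sqx_def by simp

definition beta :: "nat \<Rightarrow> nat \<Rightarrow> real" where
  "beta q l = (\<Sum>m<L. Sqx n L Y x q $$ (0, m) * mat_inv (Sxx n L x) $$ (m, l))"

lemma Ypar_eq: "Ypar n L Y x i q = fmean n (\<lambda>j. Y j q) + (\<Sum>l<L. beta q l * (x i l - fmean n (\<lambda>j. x j l)))"
proof -
  let ?v = "vec L (\<lambda>l. x i l - fmean n (\<lambda>j. x j l))"
  have "(mat_inv (Sxx n L x) *\<^sub>v ?v) $ m = (\<Sum>l<L. mat_inv (Sxx n L x) $$ (m, l) * (x i l - fmean n (\<lambda>j. x j l)))"
    if "m < L" for m
    using Sxx_inv(1) that by (subst index_mult_mat_vec_sum) auto
  then have "(Sqx n L Y x q *\<^sub>v (mat_inv (Sxx n L x) *\<^sub>v ?v)) $ 0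
      = (\<Sum>m<L. Sqx n L Y x q $$ (0, m) * (\<Sum>l<L. mat_inv (Sxx n L x) $$ (m, l) * (x i l - fmean n (\<lambda>j. x j l))))"
    using Sxx_inv(1) by (subst index_mult_mat_vec_sum) (auto simp: Sqx_def)
  also have "\<dots> = (\<Sum>l<L. beta q l * (x i l - fmean n (\<lambda>j. x j l)))"
    unfolding beta_def sum_distrib_left sum_distrib_right
    by (subst sum.swap) (simp add: mult.assoc)
  finally show ?thesis unfolding Ypar_def by simp
qed

lemma fcov_Ypar_left: "fcov n (\<lambda>i. Ypar n L Y x i q) w = (\<Sum>l<L. beta q l * fcov n (\<lambda>i. x i l) w)"
proof -
  have "fcov n (\<lambda>i. Ypar n L Y x i q) w
      = fcov n (\<lambda>i. fmean n (\<lambda>j. Y j q) + (\<Sum>l<L. beta q l * (x i l - fmean n (\<lambda>j. x j l)))) w"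
    by (simp only: Ypar_eq)
  also have "\<dots> = (\<Sum>l<L. beta q l * fcov n (\<lambda>i. x i l) w)"
    by (simp only: fcov_add_left fcov_const_left add_0 fcov_sum_left[OF finite_lessThan]
        fcov_mult_left fcov_diff_const_left)
  finally show ?thesis .
qed

lemma sum_beta_mult_Sxx:
  assumes l: "l < L"
  shows "(\<Sum>m<L. beta q m * Sxx n L x $$ (m, l)) = fcov n (\<lambda>i. Y i q) (\<lambda>i. x i l)"
proof -
  have "(\<Sum>m<L. beta q m * Sxx n L x $$ (m, l))
      = (\<Sum>k<L. Sqx n L Y x q $$ (0, k) * (mat_inv (Sxx n L x) * Sxx n L x) $$ (k, l))"
    unfolding beta_def sum_distrib_right using l Sxx_inv(1) Sxx_carrier
    by (subst sum.swap) (simp add: index_mult_mat_sum sum_distrib_left mult.assoc del: index_mult_mat)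
  also have "\<dots> = (\<Sum>k<L. if k = l then Sqx n L Y x q $$ (0, k) else 0)"
    using l by (intro sum.cong refl) (simp add: Sxx_inv(3))
  also have "\<dots> = Sqx n L Y x q $$ (0, l)"
    using l by simp
  finally show ?thesis using Sqx_index[OF l] by simp
qed

lemma fcov_Ypar_x:
  "l < L \<Longrightarrow> fcov n (\<lambda>i. Ypar n L Y x i q) (\<lambda>i. x i l) = fcov n (\<lambda>i. Y i q) (\<lambda>i. x i l)"
  unfolding fcov_Ypar_left sum_beta_mult_Sxx[symmetric]
  by (intro sum.cong refl) (simp add: Sxx_index fcov_commute)

lemma fcov_x_Yperp: "l < L \<Longrightarrow> fcov n (\<lambda>i. x i l) (\<lambda>i. Yperp n L Y x i q) = 0"
  unfolding Yperp_def fcov_diff_right by (simp add: fcov_commute[of n "\<lambda>i. x i l"] fcov_Ypar_x)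

lemma fcov_Ypar_Yperp: "fcov n (\<lambda>i. Ypar n L Y x i q) (\<lambda>i. Yperp n L Y x i q') = 0"
  unfolding fcov_Ypar_left by (simp add: fcov_x_Yperp)

lemma Sqx_Ypar: "Sqx n L (Ypar n L Y x) x q = Sqx n L Y x q"
  unfolding Sqx_def by (intro eq_matI) (simp_all add: fcov_Ypar_x)

end

section \<open>Projection of the factorial effect estimator\<close>

locale crfe = factorial_design K iota eff + complete_randomization "2^K" n nq + linear_projection n L Y x
  for K iota eff n nq L Y x
begin

abbreviation F :: nat where
  "F \<equiv> 2^K - 1"

definition c1 :: real where
  "c1 = 1 / 2^(K - 1)"

lemma c2_eq: "c2 K = c1 * c1"
  unfolding c2_def c1_def by (simp add: power2_eq_square)

lemma c1_mult_two_pow: "c1 * 2^K = 2"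
  unfolding c1_def using two_pow_K by simp

lemma c2_mult_two_pow: "c2 K * 2^K * 2^K = 4"
proof -
  have "c2 K * 2^K * 2^K = (c1 * 2^K) * (c1 * 2^K)" unfolding c2_eq by (simp only: mult_ac)
  then show ?thesis unfolding c1_mult_two_pow by simp
qed

lemma tauhat_index:
  "f < F \<Longrightarrow> tauhat K n eff iota nq W z $ f = (\<Sum>q<2^K. Yhat n nq (\<lambda>i q. c1 * g f q * W i q) z q)"
  unfolding tauhat_def Yhat_def c1_def[symmetric] by (simp add: sum_distrib_left sum_divide_distrib mult.assoc)

lemma tau_index: "f < F \<Longrightarrow> tau K n eff iota W $ f = (\<Sum>q<2^K. fmean n (\<lambda>i. c1 * g f q * W i q))"
  unfolding tau_def c1_def[symmetric] by (simp add: sum_distrib_left fmean_mult_left mult.assoc)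

lemma tau_ind_index: "f < F \<Longrightarrow> tau_ind K eff iota W i $ f = (\<Sum>q<2^K. c1 * g f q * W i q)"
  unfolding tau_ind_def c1_def[symmetric] by (simp add: sum_distrib_left mult.assoc)

lemma Ex_tauhat: "f < F \<Longrightarrow> Ex Om (\<lambda>z. tauhat K n eff iota nq W z $ f) = tau K n eff iota W $ f"
  by (simp add: tauhat_index tau_index Ex_sum_Yhat)

lemma scov_tauhat:
  assumes "f < F" "f' < F"
  shows "scov Om (\<lambda>z. tauhat K n eff iota nq W z $ f) (\<lambda>z. tauhat K n eff iota nq W' z $ f')
    = c2 K * (\<Sum>q<2^K. g f q * g f' q * fcov n (\<lambda>i. W i q) (\<lambda>i. W' i q) / nq q)
      - fcov n (\<lambda>i. tau_ind K eff iota W i $ f) (\<lambda>i. tau_ind K eff iota W' i $ f') / n"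
proof -
  have "fcov n (\<lambda>i. c1 * g f q * W i q) (\<lambda>i. c1 * g f' q * W' i q)
      = c1 * c1 * (g f q * g f' q * fcov n (\<lambda>i. W i q) (\<lambda>i. W' i q))" for q
    by (simp only: fcov_mult_left fcov_mult_right) (simp only: mult_ac)
  then show ?thesis
    using assms by (simp add: tauhat_index tau_ind_index scov_sum_Yhat c2_eq sum_distrib_left)
qed

definition tau_err :: "(nat \<Rightarrow> nat \<Rightarrow> real) \<Rightarrow> (nat \<Rightarrow> nat) \<Rightarrow> real vec" where
  "tau_err W z = tauhat K n eff iota nq W z - tau K n eff iota W"

lemma dim_tau_err [simp]: "dim_vec (tau_err W z) = F"
  unfolding tau_err_def tau_def by simp

lemma tau_err_index: "f < F \<Longrightarrow> tau_err W z $ f = tauhat K n eff iota nq W z $ f - tau K n eff iota W $ f"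
  unfolding tau_err_def by (simp add: tau_def)

definition Vtt_cross :: "(nat \<Rightarrow> nat \<Rightarrow> real) \<Rightarrow> (nat \<Rightarrow> nat \<Rightarrow> real) \<Rightarrow> real mat" where
  "Vtt_cross W W' = mat F F (\<lambda>(f, f').
     c2 K * (\<Sum>q<2^K. g f q * g f' q * fcov n (\<lambda>i. W i q) (\<lambda>i. W' i q) / nq q)
     - fcov n (\<lambda>i. tau_ind K eff iota W i $ f) (\<lambda>i. tau_ind K eff iota W' i $ f') / n)"

lemma Vtt_eq_Vtt_cross: "Vtt K n eff iota nq W = Vtt_cross W W"
  unfolding Vtt_def Vtt_cross_def Stt_def
  by (intro eq_matI) (simp_all add: outer_index bvec_def mult_ac)

lemma Exv_tau_err: "Exv F Om (tau_err W) = 0\<^sub>v F"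
  unfolding Exv_def by (intro eq_vecI) (simp_all add: tau_err_index Ex_diff_const[OF finite_Om Om_nonempty] Ex_tauhat)

lemma scov_tau_err:
  assumes "f < F" "f' < F"
  shows "scov Om (\<lambda>z. tau_err W z $ f) (\<lambda>z. tau_err W' z $ f')
    = c2 K * (\<Sum>q<2^K. g f q * g f' q * fcov n (\<lambda>i. W i q) (\<lambda>i. W' i q) / nq q)
      - fcov n (\<lambda>i. tau_ind K eff iota W i $ f) (\<lambda>i. tau_ind K eff iota W' i $ f') / n"
  using assms by (simp add: tau_err_index scov_diff_const[OF finite_Om Om_nonempty] scov_tauhat)

lemma Covm_tau_err: "Covm F F Om (tau_err W) (tau_err W') = Vtt_cross W W'"
  unfolding Vtt_cross_def
  by (intro eq_matI) (simp_all add: Covm_index scov_tau_err)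

abbreviation Tx :: "(nat \<Rightarrow> nat) \<Rightarrow> real vec" where
  "Tx \<equiv> tauhat_x K n L eff iota nq x"

lemma dim_Tx [simp]: "dim_vec (Tx z) = F * L"
  unfolding tauhat_x_def by simp

lemma tau_covariate: "f < F \<Longrightarrow> tau K n eff iota (\<lambda>i q. x i l) $ f = 0"
  unfolding tau_def by (simp add: sum_distrib_right[symmetric] sum_gcoef)

lemma tau_ind_covariate: "f < F \<Longrightarrow> tau_ind K eff iota (\<lambda>i q. x i l) i $ f = 0"
  unfolding tau_ind_def by (simp add: sum_distrib_right[symmetric] sum_gcoef)

lemma Tx_index: "r < F * L \<Longrightarrow> Tx z $ r = tau_err (\<lambda>i q. x i (r mod L)) z $ (r div L)"
  using less_mult_imp_div_less[of r F L]
  by (simp add: tauhat_x_def tau_err_index tau_covariate tauhat_def xhat_def Yhat_def mult.commute)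

lemma Exv_Tx: "Exv (F * L) Om Tx = 0\<^sub>v (F * L)"
  using Exv_tau_err unfolding Exv_def
  by (intro eq_vecI) (simp_all add: Tx_index less_mult_imp_div_less mult.commute vec_eq_iff)

lemma dim_Vxx [simp]:
  "dim_row (Vxx K n L eff iota nq x) = F * L" "dim_col (Vxx K n L eff iota nq x) = F * L"
  unfolding Vxx_def by simp_all

lemma dim_Vtx [simp]:
  "dim_row (Vtx K n L eff iota nq W x) = F" "dim_col (Vtx K n L eff iota nq W x) = F * L"
  unfolding Vtx_def by simp_all

lemma Vxx_index:
  assumes "r < F * L" "s < F * L"
  shows "Vxx K n L eff iota nq x $$ (r, s)
    = c2 K * (\<Sum>q<2^K. g (r div L) q * g (s div L) q
        * fcov n (\<lambda>i. x i (r mod L)) (\<lambda>i. x i (s mod L)) / nq q)"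
proof -
  have "kron (outer (bvec K eff iota q) (bvec K eff iota q)) (Sxx n L x) $$ (r, s)
      = g (r div L) q * g (s div L) q * fcov n (\<lambda>i. x i (r mod L)) (\<lambda>i. x i (s mod L))" for q
    using assms less_mult_imp_div_less[of r F L] less_mult_imp_div_less[of s F L] Sxx_carrier
      mod_less_divisor[of L r] mod_less_divisor[of L s]
    by (cases "L = 0") (simp_all add: kron_index outer_index bvec_def Sxx_index mult.commute)
  then show ?thesis using assms by (simp add: Vxx_def)
qed

lemma Vtx_index:
  assumes "f < F" "r < F * L"
  shows "Vtx K n L eff iota nq W x $$ (f, r)
    = c2 K * (\<Sum>q<2^K. g f q * g (r div L) q * fcov n (\<lambda>i. W i q) (\<lambda>i. x i (r mod L)) / nq q)"
proof -
  have "kron (outer (bvec K eff iota q) (bvec K eff iota q)) (Sqx n L W x q) $$ (f, r)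
      = g f q * g (r div L) q * fcov n (\<lambda>i. W i q) (\<lambda>i. x i (r mod L))" for q
    using assms less_mult_imp_div_less[of r F L] mod_less_divisor[of L r]
    by (cases "L = 0") (simp_all add: kron_index outer_index bvec_def Sqx_index Sqx_def mult.commute)
  then show ?thesis using assms by (simp add: Vtx_def)
qed

lemma Covm_Tx: "Covm (F * L) (F * L) Om Tx Tx = Vxx K n L eff iota nq x"
  by (intro eq_matI)
    (simp_all add: Covm_index Tx_index Vxx_index scov_tau_err tau_ind_covariate
      fcov_const_left less_mult_imp_div_less mult.commute)

lemma Covm_tau_err_Tx: "Covm F (F * L) Om (tau_err W) Tx = Vtx K n L eff iota nq W x"
  by (intro eq_matI)
    (simp_all add: Covm_index Tx_index Vtx_index scov_tau_err tau_ind_covariate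
      fcov_const_right less_mult_imp_div_less mult.commute)

lemma lin_proj_tau_err:
  "lin_proj F (F * L) Om (tau_err Y) Tx z = (Vtx K n L eff iota nq Y x * mat_inv (Vxx K n L eff iota nq x)) *\<^sub>v Tx z"
proof -
  have "Tx z - 0\<^sub>v (F * L) = Tx z" by (intro eq_vecI) simp_all
  moreover have "dim_vec ((Vtx K n L eff iota nq Y x * mat_inv (Vxx K n L eff iota nq x)) *\<^sub>v Tx z) = F"
    by simp
  ultimately show ?thesis
    unfolding lin_proj_def Exv_tau_err Exv_Tx Covm_tau_err_Tx Covm_Tx
    by (intro eq_vecI) simp_all
qed

definition wt :: "nat \<Rightarrow> real" where
  "wt q = nq q / n"

definition gcent :: "nat \<Rightarrow> nat \<Rightarrow> real" where
  "gcent f q = g f q - (\<Sum>p<2^K. wt p * g f p)"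

lemma sum_wt: "(\<Sum>q<2^K. wt q) = 1"
  using two_le_n unfolding wt_def by (simp add: sum_divide_distrib[symmetric] nq_sum flip: of_nat_sum)

lemma sum_nq_mult_gcent: "(\<Sum>q<2^K. nq q * gcent f q) = 0"
proof -
  have "(\<Sum>q<2^K. nq q * gcent f q) = (\<Sum>q<2^K. nq q * g f q) - n * (\<Sum>p<2^K. wt p * g f p)"
    unfolding gcent_def by (simp add: right_diff_distrib sum_subtractf sum_distrib_right[symmetric]
        nq_sum flip: of_nat_sum)
  then show ?thesis using two_le_n unfolding wt_def by (simp add: sum_distrib_left)
qed

lemma sum_effects_gcent_mult_gcoef:
  assumes q: "q < 2^K" and p: "p < 2^K"
  shows "(\<Sum>f<F. gcent f q * g f p) = 2^K * (of_bool (q = p) - wt p)"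
proof -
  have "(\<Sum>f<F. gcent f q * g f p) = (\<Sum>f<F. g f q * g f p) - (\<Sum>s<2^K. wt s * (\<Sum>f<F. g f s * g f p))"
    unfolding gcent_def left_diff_distrib sum_subtractf sum_distrib_right sum_distrib_left
    by (subst sum.swap[of _ _ "{..<2^K}"]) (simp add: mult.assoc)
  also have "\<dots> = ((if q = p then 2^K else 0) - 1) - (\<Sum>s<2^K. wt s * ((if s = p then 2^K else 0) - 1))"
  proof -
    have "(\<Sum>s<2^K. wt s * (\<Sum>f<F. g f s * g f p)) = (\<Sum>s<2^K. wt s * ((if s = p then 2^K else 0) - 1))"
    proof (rule sum.cong[OF refl])
      fix s :: nat assume "s \<in> {..<2^K}"
      then show "wt s * (\<Sum>f<F. g f s * g f p) = wt s * ((if s = p then 2^K else 0) - 1)"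
        using sum_effects_gcoef_mult_gcoef[of s p] p by simp
    qed
    then show ?thesis using sum_effects_gcoef_mult_gcoef[OF q p] by simp
  qed
  also have "(\<Sum>s<2^K. wt s * ((if s = p then 2^K else 0) - 1)) = 2^K * wt p - 1"
  proof -
    have "wt s * ((if s = p then 2^K else 0) - 1) = (if s = p then 2^K * wt s else 0) - wt s" for s
      by (simp add: algebra_simps)
    then show ?thesis using p by (simp add: sum_subtractf sum_wt)
  qed
  also have "((if q = p then 2^K else 0) - 1) - (2^K * wt p - 1) = 2^K * (of_bool (q = p) - wt p)"
    by (simp add: algebra_simps)
  finally show ?thesis .
qed

lemma sum_gcoef_mult_gcent:
  "f1 < F \<Longrightarrow> f2 < F \<Longrightarrow> (\<Sum>p<2^K. g f1 p * gcent f2 p) = 2^K * of_bool (f1 = f2)"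
  unfolding gcent_def by (simp add: right_diff_distrib sum_subtractf sum_distrib_right[symmetric]
      sum_gcoef sum_gcoef_mult_gcoef)

definition Gram :: "real mat" where
  "Gram = mat F F (\<lambda>(f, f'). c2 K * (\<Sum>q<2^K. g f q * g f' q / nq q))"

text \<open>Centring the contrasts with the weights \<open>n\<^sub>q / n\<close> makes them biorthogonal to the
  contrasts themselves up to the factor \<open>2^K\<close> (\<open>sum_gcoef_mult_gcent\<close>); this gives the inverse
  of \<open>Gram\<close>.\<close>

definition Gram_inv :: "real mat" where
  "Gram_inv = mat F F (\<lambda>(f, f'). (\<Sum>q<2^K. nq q * gcent f q * gcent f' q) / 4)"

lemma sum_Gram_inv_mult_gcoef:
  assumes f: "f < F" and p: "p < 2^K"
  shows "(\<Sum>f'<F. Gram_inv $$ (f, f') * g f' p) = 2^K / 4 * nq p * gcent f p"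
proof -
  have "(\<Sum>f'<F. Gram_inv $$ (f, f') * g f' p) = (\<Sum>f'<F. \<Sum>q<2^K. nq q * gcent f q * (gcent f' q * g f' p) / 4)"
    using f by (intro sum.cong refl) (simp add: Gram_inv_def sum_divide_distrib sum_distrib_left mult_ac)
  also have "\<dots> = (\<Sum>q<2^K. nq q * gcent f q * (\<Sum>f'<F. gcent f' q * g f' p)) / 4"
    by (subst sum.swap) (simp add: sum_distrib_left sum_divide_distrib)
  also have "\<dots> = (\<Sum>q<2^K. nq q * gcent f q * (2^K * (of_bool (q = p) - wt p))) / 4"
    by (rule arg_cong[where f="\<lambda>t. t / 4"], rule sum.cong[OF refl])
      (simp only: sum_effects_gcent_mult_gcoef[OF _ p] lessThan_iff)
  also have "\<dots> = 2^K / 4 * nq p * gcent f p"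
  proof -
    have "nq q * gcent f q * (2^K * (of_bool (q = p) - wt p))
        = 2^K * (if q = p then nq q * gcent f q else 0) - 2^K * wt p * (nq q * gcent f q)" for q
      by (simp add: algebra_simps)
    then show ?thesis
      using p sum_nq_mult_gcent[of f] by (simp add: sum_subtractf sum_distrib_left[symmetric])
  qed
  finally show ?thesis .
qed

lemma Gram_mult_inv: "Gram * Gram_inv = 1\<^sub>m F"
proof (rule eq_matI)
  fix f1 f2 assume "f1 < dim_row (1\<^sub>m F :: real mat)" "f2 < dim_col (1\<^sub>m F :: real mat)"
  then have f1: "f1 < F" and f2: "f2 < F" by simp_all
  have sym: "Gram_inv $$ (f, f2) = Gram_inv $$ (f2, f)" if "f < F" for f
    using that f2 unfolding Gram_inv_def by (simp add: mult_ac)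
  have "(Gram * Gram_inv) $$ (f1, f2) = (\<Sum>f<F. Gram $$ (f1, f) * Gram_inv $$ (f, f2))"
    using f1 f2 by (subst index_mult_mat_sum) (simp_all add: Gram_def Gram_inv_def del: index_mat)
  also have "\<dots> = (\<Sum>f<F. \<Sum>p<2^K. c2 K * (g f1 p / nq p) * (Gram_inv $$ (f2, f) * g f p))"
    using f1 by (intro sum.cong refl) (simp add: Gram_def sym sum_distrib_left sum_distrib_right mult_ac)
  also have "\<dots> = c2 K * (\<Sum>p<2^K. g f1 p / nq p * (\<Sum>f<F. Gram_inv $$ (f2, f) * g f p))"
    by (subst sum.swap) (simp add: sum_distrib_left mult.assoc)
  also have "\<dots> = c2 K * (\<Sum>p<2^K. g f1 p / nq p * (2^K / 4 * nq p * gcent f2 p))"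
    by (rule arg_cong[where f="(*) (c2 K)"], rule sum.cong[OF refl])
      (simp only: sum_Gram_inv_mult_gcoef[OF f2] lessThan_iff)
  also have "\<dots> = c2 K * 2^K / 4 * (\<Sum>p<2^K. g f1 p * gcent f2 p)"
  proof -
    have "(\<Sum>p<2^K. g f1 p / nq p * (2^K / 4 * nq p * gcent f2 p)) = (\<Sum>p<2^K. 2^K / 4 * (g f1 p * gcent f2 p))"
      by (rule sum.cong[OF refl]) (simp add: nq_nonzero)
    then show ?thesis by (simp add: sum_distrib_left mult_ac)
  qed
  also have "\<dots> = (1\<^sub>m F :: real mat) $$ (f1, f2)"
    using f1 f2 c2_mult_two_pow by (simp add: sum_gcoef_mult_gcent)
  finally show "(Gram * Gram_inv) $$ (f1, f2) = (1\<^sub>m F :: real mat) $$ (f1, f2)" .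
qed (simp_all add: Gram_def Gram_inv_def)

lemma Vxx_eq_kron: "Vxx K n L eff iota nq x = kron Gram (Sxx n L x)"
proof (rule eq_matI)
  fix r s assume "r < dim_row (kron Gram (Sxx n L x))" "s < dim_col (kron Gram (Sxx n L x))"
  then have r: "r < F * L" and s: "s < F * L" using Sxx_carrier by (simp_all add: kron_def Gram_def)
  then show "Vxx K n L eff iota nq x $$ (r, s) = kron Gram (Sxx n L x) $$ (r, s)"
    using Sxx_carrier less_mult_imp_div_less[of r F L] less_mult_imp_div_less[of s F L]
      mod_less_divisor[of L r] mod_less_divisor[of L s]
    by (cases "L = 0")
      (simp_all add: Vxx_index kron_index Gram_def Sxx_index sum_distrib_left sum_distrib_right mult_ac)
qed (use Sxx_carrier in \<open>simp_all add: kron_def Gram_def\<close>)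

lemma Vxx_inv:
  "mat_inv (Vxx K n L eff iota nq x) \<in> carrier_mat (F * L) (F * L)"
  "Vxx K n L eff iota nq x * mat_inv (Vxx K n L eff iota nq x) = 1\<^sub>m (F * L)"
proof -
  have M: "Gram \<in> carrier_mat F F" "Gram_inv \<in> carrier_mat F F"
    unfolding Gram_def Gram_inv_def by simp_all
  have inv: "Vxx K n L eff iota nq x * kron Gram_inv (mat_inv (Sxx n L x)) = 1\<^sub>m (F * L)"
    unfolding Vxx_eq_kron kron_mult[OF M(1) Sxx_carrier M(2) Sxx_inv(1)] Gram_mult_inv Sxx_inv(2)
    by (rule kron_one)
  moreover have carrier: "kron Gram_inv (mat_inv (Sxx n L x)) \<in> carrier_mat (F * L) (F * L)"
    using M(2) Sxx_inv(1) kron_carrier[of Gram_inv "mat_inv (Sxx n L x)"] by simp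
  moreover have "Vxx K n L eff iota nq x \<in> carrier_mat (F * L) (F * L)"
    unfolding Vxx_def by simp
  ultimately have "mat_inv (Vxx K n L eff iota nq x) = kron Gram_inv (mat_inv (Sxx n L x))"
    by (intro mat_inv_eqI)
  then show "mat_inv (Vxx K n L eff iota nq x) \<in> carrier_mat (F * L) (F * L)"
    "Vxx K n L eff iota nq x * mat_inv (Vxx K n L eff iota nq x) = 1\<^sub>m (F * L)"
    using inv carrier by simp_all
qed

lemma xhat_centered:
  assumes z: "z \<in> Om" and q: "q < 2^K" and l: "l < L"
  shows "xhat n nq x z q l - fmean n (\<lambda>i. x i l) = (\<Sum>f<F. gcent f q * Tx z $ (f * L + l)) / 2"
proof -
  have Tx: "Tx z $ (f * L + l) = c1 * (\<Sum>p<2^K. g f p * xhat n nq x z p l)" if "f < F" for f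
    using that l mult_add_less_mult_nat[OF that l] unfolding tauhat_x_def c1_def by simp
  have mean: "(\<Sum>p<2^K. wt p * xhat n nq x z p l) = fmean n (\<lambda>i. x i l)"
  proof -
    have "xhat n nq x z p l = Yhat n nq (\<lambda>i q. x i l) z p" for p
      unfolding xhat_def Yhat_def ..
    then have "(\<Sum>p<2^K. wt p * xhat n nq x z p l) = (\<Sum>p<2^K. nq p * Yhat n nq (\<lambda>i q. x i l) z p) / n"
      unfolding wt_def by (simp add: sum_divide_distrib)
    then show ?thesis unfolding sum_nq_mult_Yhat[OF z] fmean_def .
  qed
  have "(\<Sum>f<F. gcent f q * Tx z $ (f * L + l)) = (\<Sum>f<F. \<Sum>p<2^K. c1 * xhat n nq x z p l * (gcent f q * g f p))"
    by (rule sum.cong[OF refl]) (simp only: lessThan_iff Tx sum_distrib_left mult_ac)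
  also have "\<dots> = c1 * (\<Sum>p<2^K. xhat n nq x z p l * (\<Sum>f<F. gcent f q * g f p))"
    by (subst sum.swap) (simp only: sum_distrib_left mult.assoc)
  also have "\<dots> = c1 * 2^K * (xhat n nq x z q l - (\<Sum>p<2^K. wt p * xhat n nq x z p l))"
  proof -
    have "(\<Sum>p<2^K. xhat n nq x z p l * (\<Sum>f<F. gcent f q * g f p))
        = (\<Sum>p<2^K. xhat n nq x z p l * (2^K * (of_bool (q = p) - wt p)))"
      by (rule sum.cong[OF refl]) (simp only: lessThan_iff sum_effects_gcent_mult_gcoef[OF q])
    also have "\<dots> = (\<Sum>p<2^K. 2^K * (if p = q then xhat n nq x z p l else 0) - 2^K * (wt p * xhat n nq x z p l))"
      by (intro sum.cong refl) (auto simp: algebra_simps)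
    also have "\<dots> = 2^K * (xhat n nq x z q l - (\<Sum>p<2^K. wt p * xhat n nq x z p l))"
      using q by (simp add: sum_subtractf sum_distrib_left[symmetric] right_diff_distrib)
    finally show ?thesis by simp
  qed
  finally show ?thesis unfolding mean c1_mult_two_pow by simp
qed

lemma Yhat_Ypar:
  assumes z: "z \<in> Om" and q: "q < 2^K"
  shows "Yhat n nq (Ypar n L Y x) z q - fmean n (\<lambda>i. Ypar n L Y x i q)
    = (\<Sum>l<L. beta q l * (xhat n nq x z q l - fmean n (\<lambda>i. x i l)))"
proof -
  define G where "G = {i. i < n \<and> z i = q}"
  have G: "real (card G) = nq q" "real (nq q) \<noteq> 0"
    using card_group[OF z q] nq_nonzero[OF q] unfolding G_def by simp_all
  have "(\<Sum>i\<in>G. \<Sum>l<L. beta q l * (x i l - fmean n (\<lambda>j. x j l)))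
      = (\<Sum>l<L. beta q l * ((\<Sum>i\<in>G. x i l) - nq q * fmean n (\<lambda>i. x i l)))"
    using G by (subst sum.swap) (simp add: sum_distrib_left[symmetric] sum_subtractf)
  then have "Yhat n nq (Ypar n L Y x) z q
      = fmean n (\<lambda>j. Y j q) + (\<Sum>l<L. beta q l * ((\<Sum>i\<in>G. x i l) - nq q * fmean n (\<lambda>i. x i l))) / nq q"
    unfolding Yhat_def G_def[symmetric] Ypar_eq
    using G by (simp add: sum.distrib add_divide_distrib)
  also have "\<dots> = fmean n (\<lambda>j. Y j q) + (\<Sum>l<L. beta q l * (xhat n nq x z q l - fmean n (\<lambda>i. x i l)))"
  proof -
    have "(\<Sum>l<L. beta q l * ((\<Sum>i\<in>G. x i l) - nq q * fmean n (\<lambda>i. x i l))) / nq q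
        = (\<Sum>l<L. beta q l * ((\<Sum>i\<in>G. x i l) / nq q - fmean n (\<lambda>i. x i l)))"
      unfolding sum_divide_distrib[of _ "{..<L}"] using G by (intro sum.cong refl) (simp add: field_simps)
    then show ?thesis unfolding xhat_def G_def by simp
  qed
  moreover have "fmean n (\<lambda>i. Ypar n L Y x i q) = fmean n (\<lambda>j. Y j q)"
  proof -
    have "(\<Sum>i<n. \<Sum>l<L. beta q l * (x i l - fmean n (\<lambda>j. x j l))) = 0"
      using two_le_n by (subst sum.swap) (simp add: sum_distrib_left[symmetric] sum_subtractf fmean_def)
    then show ?thesis unfolding Ypar_eq using two_le_n by (simp add: fmean_def sum.distrib)
  qed
  ultimately show ?thesis by simp
qed

lemma tau_err_Ypar:
  assumes z: "z \<in> Om" and f: "f < F"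
  shows "tau_err (Ypar n L Y x) z $ f
    = c1 * (\<Sum>q<2^K. g f q * (\<Sum>l<L. beta q l * (xhat n nq x z q l - fmean n (\<lambda>i. x i l))))"
proof -
  have "tau_err (Ypar n L Y x) z $ f
      = c1 * (\<Sum>q<2^K. g f q * (Yhat n nq (Ypar n L Y x) z q - fmean n (\<lambda>i. Ypar n L Y x i q)))"
    using f unfolding tau_err_def tauhat_def tau_def c1_def[symmetric]
    by (simp add: right_diff_distrib sum_subtractf)
  also have "\<dots> = c1 * (\<Sum>q<2^K. g f q * (\<Sum>l<L. beta q l * (xhat n nq x z q l - fmean n (\<lambda>i. x i l))))"
    using Yhat_Ypar[OF z] by simp
  finally show ?thesis .
qed

definition proj_coef :: "real mat" where
  "proj_coef = mat F (F * L) (\<lambda>(f, r). c1 / 2 * (\<Sum>q<2^K. g f q * gcent (r div L) q * beta q (r mod L)))"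

lemma proj_coef_carrier: "proj_coef \<in> carrier_mat F (F * L)"
  unfolding proj_coef_def by simp

lemma tau_err_Ypar_eq_proj_coef:
  assumes z: "z \<in> Om"
  shows "tau_err (Ypar n L Y x) z = proj_coef *\<^sub>v Tx z"
proof (rule eq_vecI)
  fix f assume "f < dim_vec (proj_coef *\<^sub>v Tx z)"
  then have f: "f < F" by (simp add: proj_coef_def)
  have "(proj_coef *\<^sub>v Tx z) $ f = (\<Sum>f'<F. \<Sum>l<L. proj_coef $$ (f, f' * L + l) * Tx z $ (f' * L + l))"
    using f proj_coef_carrier by (simp add: index_mult_mat_vec_sum sum_lessThan_mult_nat del: index_mult_mat_vec)
  also have "\<dots> = (\<Sum>f'<F. \<Sum>l<L. \<Sum>q<2^K. c1 * g f q * beta q l * (gcent f' q * Tx z $ (f' * L + l) / 2))"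
    using f mult_add_less_mult_nat[of _ F _ L]
    by (intro sum.cong refl) (simp add: proj_coef_def sum_distrib_left sum_distrib_right mult_ac)
  also have "\<dots> = (\<Sum>q<2^K. \<Sum>l<L. \<Sum>f'<F. c1 * g f q * beta q l * (gcent f' q * Tx z $ (f' * L + l) / 2))"
    by (subst sum.swap) (subst sum.swap, rule sum.cong[OF refl], rule sum.swap)
  also have "\<dots> = c1 * (\<Sum>q<2^K. g f q * (\<Sum>l<L. beta q l * ((\<Sum>f'<F. gcent f' q * Tx z $ (f' * L + l)) / 2)))"
    by (simp only: sum_distrib_left sum_divide_distrib mult.assoc)
  also have "\<dots> = c1 * (\<Sum>q<2^K. g f q * (\<Sum>l<L. beta q l * (xhat n nq x z q l - fmean n (\<lambda>i. x i l))))"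
  proof (rule arg_cong[where f="(*) c1"], rule sum.cong[OF refl])
    fix q :: nat assume "q \<in> {..<2^K}"
    then have "(\<Sum>l<L. beta q l * ((\<Sum>f'<F. gcent f' q * Tx z $ (f' * L + l)) / 2))
        = (\<Sum>l<L. beta q l * (xhat n nq x z q l - fmean n (\<lambda>i. x i l)))"
      by (intro sum.cong refl) (simp only: lessThan_iff xhat_centered[OF z, symmetric])
    then show "g f q * (\<Sum>l<L. beta q l * ((\<Sum>f'<F. gcent f' q * Tx z $ (f' * L + l)) / 2))
        = g f q * (\<Sum>l<L. beta q l * (xhat n nq x z q l - fmean n (\<lambda>i. x i l)))" by simp
  qed
  also have "\<dots> = tau_err (Ypar n L Y x) z $ f"
    by (rule tau_err_Ypar[OF z f, symmetric])
  finally show "tau_err (Ypar n L Y x) z $ f = (proj_coef *\<^sub>v Tx z) $ f" ..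
qed (simp add: proj_coef_def)

lemma Vtx_eq_proj_coef_mult_Vxx: "Vtx K n L eff iota nq Y x = proj_coef * Vxx K n L eff iota nq x"
proof -
  have "Vtx K n L eff iota nq Y x = Covm F (F * L) Om (tau_err (Ypar n L Y x)) Tx"
    unfolding Covm_tau_err_Tx Vtx_def Sqx_Ypar ..
  also have "\<dots> = proj_coef * Covm (F * L) (F * L) Om Tx Tx"
    by (rule Covm_mult_mat_vec_left[OF proj_coef_carrier]) (simp_all add: tau_err_Ypar_eq_proj_coef carrier_vecI)
  finally show ?thesis unfolding Covm_Tx .
qed

lemma Vtx_mult_inv_Vxx:
  "Vtx K n L eff iota nq Y x * mat_inv (Vxx K n L eff iota nq x) = proj_coef"
proof -
  have "Vxx K n L eff iota nq x \<in> carrier_mat (F * L) (F * L)" unfolding Vxx_def by simp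
  then show ?thesis
    unfolding Vtx_eq_proj_coef_mult_Vxx
    using proj_coef_carrier Vxx_inv by (simp add: assoc_mult_mat[of _ F "F * L" _ "F * L" _ "F * L"])
qed

lemma tau_err_Yperp: "tau_err (Yperp n L Y x) z = tau_err Y z - tau_err (Ypar n L Y x) z"
  unfolding tau_err_def tauhat_def tau_def Yhat_def Yperp_def fmean_def
  by (intro eq_vecI) (simp_all add: sum_subtractf diff_divide_distrib right_diff_distrib)

lemma Vtt_cross_Ypar_Yperp: "Vtt_cross (Ypar n L Y x) (Yperp n L Y x) = 0\<^sub>m F F"
proof -
  have "fcov n (\<lambda>i. tau_ind K eff iota (Ypar n L Y x) i $ f) (\<lambda>i. tau_ind K eff iota (Yperp n L Y x) i $ f') = 0"
    if "f < F" "f' < F" for f f'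
    using that
    by (simp add: tau_ind_index fcov_sum_left fcov_sum_right fcov_mult_left fcov_mult_right fcov_Ypar_Yperp)
  then show ?thesis unfolding Vtt_cross_def by (intro eq_matI) (simp_all add: fcov_Ypar_Yperp)
qed

end

theorem theorem1:
  fixes K n L :: nat
    and iota :: "nat \<Rightarrow> nat \<Rightarrow> int"
    and eff :: "nat \<Rightarrow> nat set"
    and nq :: "nat \<Rightarrow> nat"
    and Y x :: "nat \<Rightarrow> nat \<Rightarrow> real"
  assumes K: "K \<ge> 1"
    and iota: "bij_betw (\<lambda>q. \<lambda>k\<in>{1..K}. iota q k) {..<2^K} ({1..K} \<rightarrow>\<^sub>E {-1, 1})"
    and eff: "bij_betw eff {..<2^K - 1} {A. A \<subseteq> {1..K} \<and> A \<noteq> {}}"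
    and nq_pos: "\<And>q. q < 2^K \<Longrightarrow> nq q \<ge> 1"
    and nq_sum: "(\<Sum>q<2^K. nq q) = n"
    and Sxx_nonsing: "invertible_mat (Sxx n L x)"
  defines "F \<equiv> 2^K - 1"
    and "Om \<equiv> assignments n (2^K) nq"
    and "B \<equiv> Vtx K n L eff iota nq Y x * mat_inv (Vxx K n L eff iota nq x)"
    and "Th \<equiv> (\<lambda>z. tauhat K n eff iota nq Y z - tau K n eff iota Y)"
    and "Tx \<equiv> tauhat_x K n L eff iota nq x"
  shows "(\<forall>z\<in>Om. lin_proj F (F * L) Om Th Tx z = B *\<^sub>v Tx z)
    \<and> (\<forall>z\<in>Om. Th z - lin_proj F (F * L) Om Th Tx z = Th z - B *\<^sub>v Tx z)
    \<and> Covm F F Om (\<lambda>z. B *\<^sub>v Tx z) (\<lambda>z. B *\<^sub>v Tx z) = Vtt K n eff iota nq (Ypar n L Y x)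
    \<and> Covm F F Om (\<lambda>z. Th z - B *\<^sub>v Tx z) (\<lambda>z. Th z - B *\<^sub>v Tx z) = Vtt K n eff iota nq (Yperp n L Y x)
    \<and> Covm F F Om (\<lambda>z. B *\<^sub>v Tx z) (\<lambda>z. Th z - B *\<^sub>v Tx z) = 0\<^sub>m F F"
proof -
  have "(\<Sum>q<(2::nat)^K. 1) \<le> n"
    unfolding nq_sum[symmetric] using nq_pos by (intro sum_mono) simp
  moreover have "(2::nat) \<le> 2^K" using K by (simp add: self_le_power)
  ultimately have "2 \<le> n" by simp
  then interpret crfe K iota eff n nq L Y x
    using K iota eff nq_pos nq_sum Sxx_nonsing by unfold_locales auto
  have Th: "Th = tau_err Y"
    unfolding Th_def tau_err_def ..
  have par: "B *\<^sub>v Tx z = tau_err (Ypar n L Y x) z" if "z \<in> assignments n (2^K) nq" for z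
    unfolding B_def Tx_def Vtx_mult_inv_Vxx tau_err_Ypar_eq_proj_coef[OF that] ..
  have perp: "Th z - tau_err (Ypar n L Y x) z = tau_err (Yperp n L Y x) z" for z
    unfolding Th tau_err_Yperp ..
  have proj: "lin_proj F (F * L) Om Th Tx z = B *\<^sub>v Tx z" for z
    unfolding F_def Om_def Th Tx_def B_def by (rule lin_proj_tau_err)
  have "Covm F F Om (\<lambda>z. B *\<^sub>v Tx z) (\<lambda>z. B *\<^sub>v Tx z) = Vtt K n eff iota nq (Ypar n L Y x)"
    unfolding Vtt_eq_Vtt_cross Covm_tau_err[symmetric] F_def Om_def by (rule Covm_cong) (simp_all add: par)
  moreover have "Covm F F Om (\<lambda>z. Th z - B *\<^sub>v Tx z) (\<lambda>z. Th z - B *\<^sub>v Tx z)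
      = Vtt K n eff iota nq (Yperp n L Y x)"
    unfolding Vtt_eq_Vtt_cross Covm_tau_err[symmetric] F_def Om_def by (rule Covm_cong) (simp_all add: par perp)
  moreover have "Covm F F Om (\<lambda>z. B *\<^sub>v Tx z) (\<lambda>z. Th z - B *\<^sub>v Tx z) = 0\<^sub>m F F"
    unfolding Vtt_cross_Ypar_Yperp[symmetric] Covm_tau_err[symmetric] F_def Om_def
    by (rule Covm_cong) (simp_all add: par perp)
  ultimately show ?thesis using proj by simp
qed

end
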